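(* Let $\xi$ and $\eta$ be jointly stationary and ergodic random measures on $\mathbb{R}^d$, where $\eta$ is discrete with locally finite support, and let $\eta^*$ be the simple point process with the same support as $\eta$. Assume $\lambda_\xi,\lambda_\eta,\lambda_{\eta^*}\in(0,\infty)$. Let $\alpha\in(0,\lambda_\xi\lambda_\eta^{-1}]$ and let $\tau$ be an allocation with appetite $\alpha$ with respect to $(\xi,\eta)$. Then $\tau$ is $\alpha$-balanced, i.e. almost surely $$\eta\big(\{x\in\mathbb{R}^d:\xi(C^\tau(x))\ne\alpha\,\eta(\{x\})\}\big)=0,$$ and moreover $\lambda_\xi\,\mathbb{P}_\xi(\tau(0)\neq\infty)=\alpha\lambda_\eta$.
   Context: Framework: $(\Omega,\mathcal{F},\mathbb{P})$ is a probability space with a measurable flow $(\theta_x)_{x\in\mathbb{R}^d}$ ($(\omega,x)\mapsto\theta_x\omega$ measurable, $\theta_0=\mathrm{id}$, $\theta_x\circ\theta_y=\theta_{x+y}$), $\mathbb{P}$ stationary ($\mathbb{P}\circ\theta_x=\mathbb{P}$) and ergodic (flow-invariant events have probability 0 or 1). A random measure is a kernel $\xi$ from $\Omega$ to $\mathcal{B}(\mathbb{R}^d)$, a.s. locally finite; it is stationary if $\xi(\theta_x\omega,C-x)=\xi(\omega,C)$ for all Borel $C$, all $x$, a.e. $\omega$; "jointly stationary and ergodic" means all measures involved are stationary in this sense on such a space. Intensity: $\lambda_\xi:=\mathbb{E}\,\xi([0,1]^d)$. Palm probability of a stationary $\xi$ with $0<\lambda_\xi<\infty$: $\mathbb{P}_\xi(A):=\lambda_\xi^{-1}\lambda_d(B)^{-1}\mathbb{E}\int\mathbf{1}_B(x)\mathbf{1}_A(\theta_x)\,\xi(dx)$,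 $A\in\mathcal{F}$, for any Borel $B$ with $0<\lambda_d(B)<\infty$ ($\lambda_d$ = Lebesgue measure; independent of $B$). An allocation is a measurable $\tau:\Omega\times\mathbb{R}^d\to\mathbb{R}^d\cup\{\infty\}$ with $\tau(\theta_y\omega,x-y)=\tau(\omega,x)-y$ for all $x,y$, a.e. $\omega$. Write $C^\tau(z):=\{y\in\mathbb{R}^d:\tau(y)=z\}$ and $x\in\eta^*$ if $\eta^*(\{x\})>0$. An allocation $\tau$ has appetite $\alpha>0$ w.r.t. $(\xi,\eta)$ if: (i) a.s. $\xi(\{z:\tau(z)\notin \mathrm{supp}(\eta^* )\cup\{\infty\}\})=0$; (ii) a.s. $\eta^*(\{x:\xi(C^\tau(x))>\alpha\eta(\{x\})\})=0$; (iii) the event that both $\xi(\{z:\tau(z)=\infty\})>0$ and $\eta^*(\{x:\xi(C^\tau(x))<\alpha\eta(\{x\})\})>0$ has probability zero. *)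

theory Defs
  imports "HOL-Probability.Probability"
begin

text \<open>The point at infinity
  used by allocations is modelled by None in 'd option.\<close>

definition measurable_flow :: "'a measure \<Rightarrow> ('d::euclidean_space \<Rightarrow> 'a \<Rightarrow> 'a) \<Rightarrow> bool" where
  "measurable_flow M \<theta> \<longleftrightarrow>
     (\<lambda>(\<omega>, x). \<theta> x \<omega>) \<in> (M \<Otimes>\<^sub>M borel) \<rightarrow>\<^sub>M M \<and>
     (\<forall>\<omega>\<in>space M. \<theta> 0 \<omega> = \<omega>) \<and>
     (\<forall>x y. \<forall>\<omega>\<in>space M. \<theta> x (\<theta> y \<omega>) = \<theta> (x + y) \<omega>)"

definition stationary_flow :: "'a measure \<Rightarrow> ('d::euclidean_space \<Rightarrow> 'a \<Rightarrow> 'a) \<Rightarrow> bool" where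
  "stationary_flow M \<theta> \<longleftrightarrow> (\<forall>x. distr M M (\<theta> x) = M)"

definition ergodic_flow :: "'a measure \<Rightarrow> ('d::euclidean_space \<Rightarrow> 'a \<Rightarrow> 'a) \<Rightarrow> bool" where
  "ergodic_flow M \<theta> \<longleftrightarrow>
     (\<forall>A\<in>sets M. (\<forall>x. \<theta> x -` A \<inter> space M = A) \<longrightarrow> measure M A = 0 \<or> measure M A = 1)"

definition random_measure :: "'a measure \<Rightarrow> ('a \<Rightarrow> 'd::euclidean_space measure) \<Rightarrow> bool" where
  "random_measure M \<xi> \<longleftrightarrow>
     (\<forall>\<omega>\<in>space M. sets (\<xi> \<omega>) = sets borel) \<and>
     (\<forall>C\<in>sets borel. (\<lambda>\<omega>. emeasure (\<xi> \<omega>) C) \<in> borel_measurable M) \<and>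
     (AE \<omega> in M. \<forall>C. bounded C \<longrightarrow> emeasure (\<xi> \<omega>) C < \<infinity>)"

definition stationary_rm ::
  "'a measure \<Rightarrow> ('d::euclidean_space \<Rightarrow> 'a \<Rightarrow> 'a) \<Rightarrow> ('a \<Rightarrow> 'd measure) \<Rightarrow> bool" where
  "stationary_rm M \<theta> \<xi> \<longleftrightarrow>
     (AE \<omega> in M. \<forall>x. \<forall>C\<in>sets borel.
        emeasure (\<xi> (\<theta> x \<omega>)) ((\<lambda>c. c - x) ` C) = emeasure (\<xi> \<omega>) C)"

definition intensity :: "'a measure \<Rightarrow> ('a \<Rightarrow> 'd::euclidean_space measure) \<Rightarrow> ennreal" where
  "intensity M \<xi> = (\<integral>\<^sup>+ \<omega>. emeasure (\<xi> \<omega>) (cbox 0 One) \<partial>M)"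

text \<open>Atoms of eta (= support of eta when eta is discrete with locally finite support).\<close>
definition atoms :: "('a \<Rightarrow> 'd::euclidean_space measure) \<Rightarrow> 'a \<Rightarrow> 'd set" where
  "atoms \<eta> \<omega> = {x. emeasure (\<eta> \<omega>) {x} > 0}"

definition discrete_locally_finite :: "'a measure \<Rightarrow> ('a \<Rightarrow> 'd::euclidean_space measure) \<Rightarrow> bool" where
  "discrete_locally_finite M \<eta> \<longleftrightarrow>
     (AE \<omega> in M. (\<forall>B. bounded B \<longrightarrow> finite (B \<inter> atoms \<eta> \<omega>)) \<and>
                 emeasure (\<eta> \<omega>) (UNIV - atoms \<eta> \<omega>) = 0)"

definition eta_star :: "('a \<Rightarrow> 'd::euclidean_space measure) \<Rightarrow> 'a \<Rightarrow> 'd set \<Rightarrow> ennreal" where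
  "eta_star \<eta> \<omega> C = emeasure (count_space UNIV) (C \<inter> atoms \<eta> \<omega>)"

definition intensity_star :: "'a measure \<Rightarrow> ('a \<Rightarrow> 'd::euclidean_space measure) \<Rightarrow> ennreal" where
  "intensity_star M \<eta> = (\<integral>\<^sup>+ \<omega>. eta_star \<eta> \<omega> (cbox 0 One) \<partial>M)"

definition allocation ::
  "'a measure \<Rightarrow> ('d::euclidean_space \<Rightarrow> 'a \<Rightarrow> 'a) \<Rightarrow> ('a \<Rightarrow> 'd \<Rightarrow> 'd option) \<Rightarrow> bool" where
  "allocation M \<theta> \<tau> \<longleftrightarrow>
     {p \<in> space (M \<Otimes>\<^sub>M borel). \<tau> (fst p) (snd p) = None} \<in> sets (M \<Otimes>\<^sub>M borel) \<and>
     (\<forall>C\<in>sets borel. {p \<in> space (M \<Otimes>\<^sub>M borel). \<exists>y\<in>C. \<tau> (fst p) (snd p) = Some y}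
                        \<in> sets (M \<Otimes>\<^sub>M borel)) \<and>
     (AE \<omega> in M. \<forall>x y. \<tau> (\<theta> y \<omega>) (x - y) = map_option (\<lambda>z. z - y) (\<tau> \<omega> x))"

definition cell :: "('a \<Rightarrow> 'd \<Rightarrow> 'd option) \<Rightarrow> 'a \<Rightarrow> 'd \<Rightarrow> 'd set" where
  "cell \<tau> \<omega> z = {y. \<tau> \<omega> y = Some z}"

definition null_in :: "'d measure \<Rightarrow> 'd set \<Rightarrow> bool" where
  "null_in \<mu> A \<longleftrightarrow> (\<exists>N\<in>null_sets \<mu>. A \<subseteq> N)"

definition appetite ::
  "'a measure \<Rightarrow> ('a \<Rightarrow> 'd::euclidean_space measure) \<Rightarrow> ('a \<Rightarrow> 'd measure)
     \<Rightarrow> ('a \<Rightarrow> 'd \<Rightarrow> 'd option) \<Rightarrow> real \<Rightarrow> bool" where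
  "appetite M \<xi> \<eta> \<tau> \<alpha> \<longleftrightarrow>
     (AE \<omega> in M. null_in (\<xi> \<omega>) {z. \<exists>y. \<tau> \<omega> z = Some y \<and> y \<notin> atoms \<eta> \<omega>}) \<and>
     (AE \<omega> in M. eta_star \<eta> \<omega>
        {x. emeasure (\<xi> \<omega>) (cell \<tau> \<omega> x) > ennreal \<alpha> * emeasure (\<eta> \<omega>) {x}} = 0) \<and>
     (AE \<omega> in M. \<not> (\<not> null_in (\<xi> \<omega>) {z. \<tau> \<omega> z = None} \<and>
        eta_star \<eta> \<omega> {x. emeasure (\<xi> \<omega>) (cell \<tau> \<omega> x) < ennreal \<alpha> * emeasure (\<eta> \<omega>) {x}} > 0))"

definition alpha_balanced ::
  "'a measure \<Rightarrow> ('a \<Rightarrow> 'd::euclidean_space measure) \<Rightarrow> ('a \<Rightarrow> 'd measure)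
     \<Rightarrow> ('a \<Rightarrow> 'd \<Rightarrow> 'd option) \<Rightarrow> real \<Rightarrow> bool" where
  "alpha_balanced M \<xi> \<eta> \<tau> \<alpha> \<longleftrightarrow>
     (AE \<omega> in M. null_in (\<eta> \<omega>)
        {x. emeasure (\<xi> \<omega>) (cell \<tau> \<omega> x) \<noteq> ennreal \<alpha> * emeasure (\<eta> \<omega>) {x}})"

text \<open>Palm probability of xi, with the window B = [0,1]^d (Lebesgue measure 1).\<close>
definition palm ::
  "'a measure \<Rightarrow> ('d::euclidean_space \<Rightarrow> 'a \<Rightarrow> 'a) \<Rightarrow> ('a \<Rightarrow> 'd measure) \<Rightarrow> 'a set \<Rightarrow> ennreal" where
  "palm M \<theta> \<xi> A =
     (\<integral>\<^sup>+ \<omega>. (\<integral>\<^sup>+ x. indicator (cbox 0 One) x * indicator A (\<theta> x \<omega>) \<partial>(\<xi> \<omega>)) \<partial>M)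
       / intensity M \<xi>"

end

theory Submission
  imports Defs
begin

text \<open>The event that some \<open>\<xi>\<close>-mass stays unallocated is invariant under the flow up to null
  sets, so by ergodicity it has probability 0 or 1. If it has probability 1, condition (iii) of the
  appetite excludes sites receiving less than \<open>\<alpha>\<close> times their \<open>\<eta>\<close>-mass and condition (ii)
  excludes sites receiving more. If it has probability 0, the mass transport principle over the
  lattice of unit cubes shows that the mean mass allocated into the unit cube is \<open>\<lambda>\<^sub>\<xi> \<ge> \<alpha> \<lambda>\<^sub>\<eta>\<close>,
  whereas pointwise it is at most \<open>\<alpha> \<eta>(cube)\<close>; so every site in the cube is balanced almost
  surely, and by stationarity every site is. The same computation gives the Palm identity.\<close>

lemma translate_borel [measurable]:
  fixes D :: "'d::euclidean_space set"
  assumes "D \<in> sets borel"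
  shows "{x. x - z \<in> D} \<in> sets borel"
proof -
  have "(\<lambda>x. x - z) -` D \<inter> space borel \<in> sets borel"
    by (rule measurable_sets[OF _ assms]) simp
  then show ?thesis by (simp add: vimage_def)
qed

lemma image_minus_translate: "(\<lambda>c. c - z) ` {x. x - z \<in> D} = (D::'d::ab_group_add set)"
  by (auto simp: image_iff intro!: exI[of _ "_ + z"])

lemma section_borel:
  "A \<in> sets (M \<Otimes>\<^sub>M borel) \<Longrightarrow> {x. (\<omega>, x) \<in> A} \<in> sets (borel :: 'd::euclidean_space measure)"
  using sets_Pair1[of A M borel \<omega>] by (simp add: vimage_def)

lemma suminf_const_ennreal: "(c::ennreal) \<noteq> 0 \<Longrightarrow> (\<Sum>m::nat. c) = \<infinity>"
  using nn_integral_count_space_nat[of "\<lambda>_. c"]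
  by (simp add: ennreal_mult_eq_top_iff)

lemma sum_eq_imp_eq_ennreal:
  fixes a b :: "'x \<Rightarrow> ennreal"
  assumes "finite F" and le: "\<And>y. y \<in> F \<Longrightarrow> a y \<le> b y" and eq: "(\<Sum>y\<in>F. a y) = (\<Sum>y\<in>F. b y)"
    and fin: "(\<Sum>y\<in>F. b y) < \<infinity>" and y: "y \<in> F"
  shows "a y = b y"
proof -
  have "(\<Sum>y\<in>F. b y) = (\<Sum>y\<in>F. b y) + (\<Sum>y\<in>F. b y - a y)"
    by (simp add: eq[symmetric] sum.distrib[symmetric] add_diff_inverse_ennreal le)
  then have "(\<Sum>y\<in>F. b y - a y) = 0"
    using fin by (metis add.right_neutral ennreal_add_left_cancel less_irrefl)
  then have "b y - a y = 0" using assms(1) y by simp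
  moreover have "b y < \<top>"
    using member_le_sum[OF y _ assms(1), of b] fin by (simp add: le_less_trans)
  ultimately show ?thesis using le[OF y] by (simp add: diff_eq_0_iff_ennreal)
qed

lemma AE_eq_if_nn_integral_ge:
  fixes f g :: "'a \<Rightarrow> ennreal"
  assumes [measurable]: "f \<in> borel_measurable M" "g \<in> borel_measurable M"
    and le: "AE x in M. f x \<le> g x" and ge: "(\<integral>\<^sup>+x. g x \<partial>M) \<le> (\<integral>\<^sup>+x. f x \<partial>M)"
    and fin: "(\<integral>\<^sup>+x. f x \<partial>M) < \<infinity>"
  shows "AE x in M. f x = g x"
proof -
  have "(\<integral>\<^sup>+x. g x \<partial>M) = (\<integral>\<^sup>+x. f x \<partial>M)"
    using ge nn_integral_mono_AE[OF le] by (rule antisym)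
  then have "(\<integral>\<^sup>+x. g x - f x \<partial>M) = 0"
    using fin by (subst nn_integral_diff) (auto simp: le)
  then have "AE x in M. g x - f x = 0"
    by (subst (asm) nn_integral_0_iff_AE) measurable
  then show ?thesis
    using le by eventually_elim (auto simp: diff_eq_0_iff_ennreal)
qed

section \<open>Stationary flows and ergodicity\<close>

locale stationary_flow_system =
  fixes M :: "'a measure" and \<theta> :: "'d::euclidean_space \<Rightarrow> 'a \<Rightarrow> 'a"
  assumes prob: "prob_space M" and flow: "measurable_flow M \<theta>" and stationary: "stationary_flow M \<theta>"
begin

lemma flow_measurable: "(\<lambda>(\<omega>, x). \<theta> x \<omega>) \<in> M \<Otimes>\<^sub>M borel \<rightarrow>\<^sub>M M"
  using flow unfolding measurable_flow_def by auto

lemma flow_measurable_lborel [measurable]: "(\<lambda>p. \<theta> (snd p) (fst p)) \<in> M \<Otimes>\<^sub>M lborel \<rightarrow>\<^sub>M M"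
  using flow_measurable
  by (subst measurable_cong_sets[OF sets_pair_measure_cong[OF refl sets_lborel] refl])
     (simp add: split_beta')

lemma flow_shift_measurable [measurable]: "\<theta> z \<in> M \<rightarrow>\<^sub>M M"
  using measurable_compose[OF measurable_Pair2'[of z borel M] flow_measurable] by simp

lemma flow_orbit_measurable: "\<omega> \<in> space M \<Longrightarrow> (\<lambda>x. \<theta> x \<omega>) \<in> borel \<rightarrow>\<^sub>M M"
  using measurable_compose[OF measurable_Pair1'[of \<omega> M borel] flow_measurable] by simp

lemma flow_in_space: "\<omega> \<in> space M \<Longrightarrow> \<theta> z \<omega> \<in> space M"
  using measurable_space[OF flow_shift_measurable] .

lemma flow_add: "\<omega> \<in> space M \<Longrightarrow> \<theta> x (\<theta> y \<omega>) = \<theta> (x + y) \<omega>"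
  using flow unfolding measurable_flow_def by auto

lemma distr_flow: "distr M M (\<theta> z) = M"
  using stationary unfolding stationary_flow_def by auto

lemma nn_integral_flow_shift:
  "f \<in> borel_measurable M \<Longrightarrow> (\<integral>\<^sup>+\<omega>. f (\<theta> z \<omega>) \<partial>M) = (\<integral>\<^sup>+\<omega>. f \<omega> \<partial>M)"
  by (subst nn_integral_distr[symmetric, of "\<theta> z" M]) (auto simp: distr_flow)

lemma AE_flow_shift:
  assumes "AE \<omega> in M. P \<omega>" shows "AE \<omega> in M. P (\<theta> z \<omega>)"
proof -
  obtain N where N: "N \<in> sets M" "emeasure M N = 0" "{\<omega>\<in>space M. \<not> P \<omega>} \<subseteq> N"
    using assms unfolding eventually_ae_filter by auto
  have "emeasure M (\<theta> z -` N \<inter> space M) = emeasure (distr M M (\<theta> z)) N"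
    using N by (simp add: emeasure_distr)
  also have "\<dots> = 0" using N by (simp add: distr_flow)
  finally show ?thesis
    using N flow_in_space by (intro AE_I[of _ _ "\<theta> z -` N \<inter> space M"]) auto
qed

lemma nn_integral_flow_shift_AE:
  assumes "g \<in> borel_measurable M" "AE \<omega> in M. f \<omega> = g \<omega>"
  shows "(\<integral>\<^sup>+\<omega>. f (\<theta> z \<omega>) \<partial>M) = (\<integral>\<^sup>+\<omega>. f \<omega> \<partial>M)"
proof -
  have "(\<integral>\<^sup>+\<omega>. f (\<theta> z \<omega>) \<partial>M) = (\<integral>\<^sup>+\<omega>. g (\<theta> z \<omega>) \<partial>M)"
    using AE_flow_shift[OF assms(2)] by (auto intro: nn_integral_cong_AE)
  also have "\<dots> = (\<integral>\<^sup>+\<omega>. g \<omega> \<partial>M)" by (rule nn_integral_flow_shift[OF assms(1)])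
  also have "\<dots> = (\<integral>\<^sup>+\<omega>. f \<omega> \<partial>M)"
    using assms(2) by (auto intro: nn_integral_cong_AE)
  finally show ?thesis .
qed

text \<open>An event invariant only up to null sets is replaced by the strictly invariant event of
  outcomes whose orbit lies in it for Lebesgue-a.e. time; Fubini shows that both agree a.s.\<close>

definition essential_orbit_event :: "'a set \<Rightarrow> 'a set" where
  "essential_orbit_event A = {\<omega> \<in> space M. emeasure lborel {x. \<theta> x \<omega> \<notin> A} = 0}"

lemma orbit_exit_borel:
  assumes "A \<in> sets M" "\<omega> \<in> space M"
  shows "{x. \<theta> x \<omega> \<notin> A} \<in> sets borel"
proof -
  have "(\<lambda>x. \<theta> x \<omega>) -` (space M - A) \<inter> space borel \<in> sets borel"
    using assms by (intro measurable_sets[OF flow_orbit_measurable]) auto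
  moreover have "(\<lambda>x. \<theta> x \<omega>) -` (space M - A) \<inter> space borel = {x. \<theta> x \<omega> \<notin> A}"
    using flow_in_space[OF assms(2)] by auto
  ultimately show ?thesis by simp
qed

lemma essential_orbit_event_sets:
  assumes [measurable]: "A \<in> sets M"
  shows "essential_orbit_event A \<in> sets M"
proof -
  define Q where "Q = {p \<in> space (M \<Otimes>\<^sub>M lborel). \<theta> (snd p) (fst p) \<notin> A}"
  have "Q \<in> sets (M \<Otimes>\<^sub>M lborel)" unfolding Q_def by measurable
  then have "(\<lambda>\<omega>. emeasure lborel (Pair \<omega> -` Q)) \<in> borel_measurable M"
    by (rule lborel.measurable_emeasure_Pair)
  then have "{\<omega> \<in> space M. emeasure lborel (Pair \<omega> -` Q) = 0} \<in> sets M"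
    by measurable
  moreover have "Pair \<omega> -` Q = {x. \<theta> x \<omega> \<notin> A}" if "\<omega> \<in> space M" for \<omega>
    using that unfolding Q_def by (auto simp: space_pair_measure)
  ultimately show ?thesis
    unfolding essential_orbit_event_def by (simp cong: rev_conj_cong)
qed

lemma essential_orbit_event_invariant:
  assumes "A \<in> sets M"
  shows "\<theta> z -` essential_orbit_event A \<inter> space M = essential_orbit_event A"
proof -
  have "emeasure lborel {x. \<theta> x (\<theta> z \<omega>) \<notin> A} = emeasure lborel {x. \<theta> x \<omega> \<notin> A}"
    if \<omega>: "\<omega> \<in> space M" for \<omega>
  proof -
    have "{x. \<theta> x (\<theta> z \<omega>) \<notin> A} = (+) z -` {x. \<theta> x \<omega> \<notin> A} \<inter> space lborel"
      using flow_add[OF \<omega>] by (auto simp: add.commute)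
    also have "emeasure lborel \<dots> = emeasure (distr lborel borel ((+) z)) {x. \<theta> x \<omega> \<notin> A}"
      using orbit_exit_borel[OF assms \<omega>] by (intro emeasure_distr[symmetric]) auto
    finally show ?thesis by (simp add: lborel_distr_plus)
  qed
  then show ?thesis
    unfolding essential_orbit_event_def using flow_in_space by auto
qed

lemma AE_essential_orbit_event_iff:
  assumes [measurable]: "A \<in> sets M" and inv: "\<And>z. AE \<omega> in M. \<theta> z \<omega> \<in> A \<longleftrightarrow> \<omega> \<in> A"
  shows "AE \<omega> in M. \<omega> \<in> essential_orbit_event A \<longleftrightarrow> \<omega> \<in> A"
proof -
  interpret pair_sigma_finite M lborel
    using prob by (simp add: pair_sigma_finite.intro prob_space_imp_sigma_finite lborel.sigma_finite_measure_axioms)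
  have "{p \<in> space (M \<Otimes>\<^sub>M lborel). \<theta> (snd p) (fst p) \<in> A \<longleftrightarrow> fst p \<in> A} \<in> sets (M \<Otimes>\<^sub>M lborel)"
    by measurable
  then have "AE \<omega> in M. AE x in lborel. \<theta> x \<omega> \<in> A \<longleftrightarrow> \<omega> \<in> A"
    using AE_commute[of "\<lambda>\<omega> x. \<theta> x \<omega> \<in> A \<longleftrightarrow> \<omega> \<in> A"] inv by simp
  moreover have lborel_ae_nontrivial: "\<not> (AE x in (lborel :: 'd measure). False)"
    by (simp add: eventually_False ae_filter_eq_bot_iff)
  ultimately show ?thesis
  proof (elim AE_mp, intro AE_I2 impI)
    fix \<omega> assume \<omega>: "\<omega> \<in> space M" and orbit: "AE x in lborel. \<theta> x \<omega> \<in> A \<longleftrightarrow> \<omega> \<in> A"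
    have "\<omega> \<in> essential_orbit_event A \<longleftrightarrow> (AE x in lborel. \<theta> x \<omega> \<in> A)"
      unfolding essential_orbit_event_def
      using \<omega> orbit_exit_borel[OF _ \<omega>] by (subst AE_iff_measurable) auto
    also have "\<dots> \<longleftrightarrow> \<omega> \<in> A"
    proof (cases "\<omega> \<in> A")
      case False
      then show ?thesis
        using orbit lborel_ae_nontrivial eventually_elim2[of "\<lambda>x. \<theta> x \<omega> \<notin> A" _ "\<lambda>x. \<theta> x \<omega> \<in> A"]
        by auto
    qed (use orbit in simp)
    finally show "\<omega> \<in> essential_orbit_event A \<longleftrightarrow> \<omega> \<in> A" .
  qed
qed

lemma ergodic_AE_invariant_zero_one:
  assumes "ergodic_flow M \<theta>" "A \<in> sets M" "\<And>z. AE \<omega> in M. \<theta> z \<omega> \<in> A \<longleftrightarrow> \<omega> \<in> A"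
  shows "measure M A = 0 \<or> measure M A = 1"
proof -
  have "measure M (essential_orbit_event A) = measure M A"
    using assms by (intro measure_eq_AE AE_essential_orbit_event_iff essential_orbit_event_sets)
  moreover have "measure M (essential_orbit_event A) = 0 \<or> measure M (essential_orbit_event A) = 1"
    using assms(1)[unfolded ergodic_flow_def] essential_orbit_event_sets[OF assms(2)]
      essential_orbit_event_invariant[OF assms(2)] by blast
  ultimately show ?thesis by simp
qed

end

section \<open>Stationary random measures\<close>

definition unit_cube :: "'d::euclidean_space set" where
  "unit_cube = {x. \<forall>i\<in>Basis. 0 \<le> x \<bullet> i \<and> x \<bullet> i < 1}"

lemma unit_cube_borel [measurable]: "unit_cube \<in> sets borel"
  unfolding unit_cube_def by measurable

lemma unit_cube_subset_cbox: "unit_cube \<subseteq> cbox 0 (One::'d::euclidean_space)"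
  unfolding unit_cube_def by (auto simp: mem_box less_imp_le)

lemma bounded_unit_cube: "bounded (unit_cube::'d::euclidean_space set)"
  using unit_cube_subset_cbox bounded_cbox bounded_subset by blast

lemma mem_cbox_if_translate_on_face:
  fixes i :: "'d::euclidean_space"
  assumes i: "i \<in> Basis" and "0 \<le> t" "t \<le> 1"
    and x: "x + t *\<^sub>R i \<in> cbox 0 One" "(x + t *\<^sub>R i) \<bullet> i = 1"
  shows "x \<in> cbox 0 One"
  unfolding mem_box(2)
proof
  fix j :: 'd assume j: "j \<in> Basis"
  show "0 \<bullet> j \<le> x \<bullet> j \<and> x \<bullet> j \<le> One \<bullet> j"
  proof (cases "j = i")
    case False
    then have "(x + t *\<^sub>R i) \<bullet> j = x \<bullet> j" using i j by (simp add: inner_add_left inner_Basis)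
    then show ?thesis using x(1) j unfolding mem_box(2) by metis
  qed (use x(2) assms(2,3) i in \<open>simp add: inner_add_left\<close>)
qed

locale stationary_random_measure = stationary_flow_system M \<theta>
  for M :: "'a measure" and \<theta> :: "'d::euclidean_space \<Rightarrow> 'a \<Rightarrow> 'a" +
  fixes \<mu> :: "'a \<Rightarrow> 'd measure"
  assumes random: "random_measure M \<mu>" and stationary_rm: "stationary_rm M \<theta> \<mu>"
begin

lemma sets_random_measure: "\<omega> \<in> space M \<Longrightarrow> sets (\<mu> \<omega>) = sets borel"
  using random unfolding random_measure_def by auto

lemma emeasure_random_measure_measurable [measurable]:
  "C \<in> sets borel \<Longrightarrow> (\<lambda>\<omega>. emeasure (\<mu> \<omega>) C) \<in> borel_measurable M"
  using random unfolding random_measure_def by auto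

lemma AE_locally_finite: "AE \<omega> in M. \<forall>C. bounded C \<longrightarrow> emeasure (\<mu> \<omega>) C < \<infinity>"
  using random unfolding random_measure_def by auto

lemma AE_emeasure_flow_shift:
  "AE \<omega> in M. \<forall>z. \<forall>D\<in>sets borel. emeasure (\<mu> (\<theta> z \<omega>)) D = emeasure (\<mu> \<omega>) {x. x - z \<in> D}"
  using stationary_rm unfolding stationary_rm_def
  by eventually_elim (metis image_minus_translate translate_borel)

lemma nn_integral_emeasure_translate:
  assumes "D \<in> sets borel"
  shows "(\<integral>\<^sup>+\<omega>. emeasure (\<mu> \<omega>) {x. x - z \<in> D} \<partial>M) = (\<integral>\<^sup>+\<omega>. emeasure (\<mu> \<omega>) D \<partial>M)"
proof -
  have "(\<integral>\<^sup>+\<omega>. emeasure (\<mu> \<omega>) {x. x - z \<in> D} \<partial>M) = (\<integral>\<^sup>+\<omega>. emeasure (\<mu> (\<theta> z \<omega>)) D \<partial>M)"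
    using AE_emeasure_flow_shift assms by (auto intro: nn_integral_cong_AE)
  also have "\<dots> = (\<integral>\<^sup>+\<omega>. emeasure (\<mu> \<omega>) D \<partial>M)"
    by (rule nn_integral_flow_shift) (use assms in measurable)
  finally show ?thesis .
qed

definition locally_finite_outcomes :: "'a set" where
  "locally_finite_outcomes = {\<omega>\<in>space M. \<forall>n::nat. emeasure (\<mu> \<omega>) (ball 0 (real n)) < \<infinity>}"

lemma locally_finite_outcomes_sets [measurable]: "locally_finite_outcomes \<in> sets M"
  unfolding locally_finite_outcomes_def by measurable

lemma AE_locally_finite_outcomes: "AE \<omega> in M. \<omega> \<in> locally_finite_outcomes"
  using AE_locally_finite AE_space
  by eventually_elim (auto simp: locally_finite_outcomes_def)

lemma AE_indicator_locally_finite_outcomes: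
  "AE \<omega> in M. indicator locally_finite_outcomes \<omega> * f \<omega> = (f \<omega> :: ennreal)"
  using AE_locally_finite_outcomes by eventually_elim simp

text \<open>Measurability of \<open>\<omega> \<mapsto> \<mu> \<omega> A\<^sub>\<omega>\<close> for the sections of a jointly measurable set \<open>A\<close> is
  obtained from subprobability kernels: \<open>\<mu> \<omega>\<close> restricted to a ball \<open>W\<close> and divided by
  \<open>1 + \<mu> \<omega> W\<close> is one, and the division can be undone only where \<open>\<mu> \<omega> W < \<infinity>\<close>.\<close>

definition normalized_restriction :: "'d set \<Rightarrow> 'a \<Rightarrow> 'd measure" where
  "normalized_restriction W \<omega> =
     density (density (\<mu> \<omega>) (indicator W)) (\<lambda>_. inverse (1 + emeasure (\<mu> \<omega>) W))"

lemma emeasure_normalized_restriction: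
  "\<omega> \<in> space M \<Longrightarrow> W \<in> sets borel \<Longrightarrow> A \<in> sets borel \<Longrightarrow>
   emeasure (normalized_restriction W \<omega>) A = inverse (1 + emeasure (\<mu> \<omega>) W) * emeasure (\<mu> \<omega>) (W \<inter> A)"
  unfolding normalized_restriction_def using sets_random_measure
  by (subst emeasure_density_const) (auto simp: emeasure_restricted)

lemma inverse_one_plus_mult_le_ennreal: "inverse (1 + c) * c \<le> (1::ennreal)"
proof (cases c)
  case (real r)
  then have "inverse (1 + c) * c = ennreal (inverse (1 + r) * r)"
    by (simp add: inverse_ennreal ennreal_mult'' flip: ennreal_plus ennreal_1)
  also have "\<dots> \<le> 1" using real by (simp add: field_simps)
  finally show ?thesis .
qed simp

lemma normalized_restriction_measurable:
  assumes W [measurable]: "W \<in> sets borel"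
  shows "normalized_restriction W \<in> M \<rightarrow>\<^sub>M subprob_algebra borel"
proof (rule measurable_subprob_algebra)
  fix \<omega> assume \<omega>: "\<omega> \<in> space M"
  have "emeasure (normalized_restriction W \<omega>) UNIV \<le> 1"
    using emeasure_normalized_restriction[OF \<omega> W, of UNIV] inverse_one_plus_mult_le_ennreal by simp
  moreover have "space (normalized_restriction W \<omega>) = UNIV"
    unfolding normalized_restriction_def using sets_random_measure[OF \<omega>] sets_eq_imp_space_eq by force
  ultimately show "subprob_space (normalized_restriction W \<omega>)"
    by (intro subprob_spaceI) auto
  show "sets (normalized_restriction W \<omega>) = sets borel"
    unfolding normalized_restriction_def using sets_random_measure[OF \<omega>] by simp
next
  fix A :: "'d set" assume [measurable]: "A \<in> sets borel"
  have "(\<lambda>\<omega>. inverse (1 + emeasure (\<mu> \<omega>) W) * emeasure (\<mu> \<omega>) (W \<inter> A)) \<in> borel_measurable M"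
    by measurable
  then show "(\<lambda>\<omega>. emeasure (normalized_restriction W \<omega>) A) \<in> borel_measurable M"
    by (rule measurable_cong[THEN iffD1, rotated]) (simp add: emeasure_normalized_restriction)
qed

lemma measurable_emeasure_section_ball:
  assumes A: "A \<in> sets (M \<Otimes>\<^sub>M borel)"
  shows "(\<lambda>\<omega>. indicator locally_finite_outcomes \<omega> * emeasure (\<mu> \<omega>) ({x. (\<omega>, x) \<in> A} \<inter> ball 0 (real n)))
           \<in> borel_measurable M"
proof -
  define W :: "'d set" where "W = ball 0 (real n)"
  have W [measurable]: "W \<in> sets borel" unfolding W_def by simp
  have "Sigma (space M) (\<lambda>\<omega>. {x. (\<omega>, x) \<in> A}) = A"
    using sets.sets_into_space[OF A] by (auto simp: space_pair_measure)
  then have [measurable]: "(\<lambda>\<omega>. emeasure (normalized_restriction W \<omega>) {x. (\<omega>, x) \<in> A}) \<in> borel_measurable M"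
    using A by (intro emeasure_measurable_subprob_algebra2[OF _ normalized_restriction_measurable]) simp_all
  have "(\<lambda>\<omega>. indicator locally_finite_outcomes \<omega> * (1 + emeasure (\<mu> \<omega>) W)
            * emeasure (normalized_restriction W \<omega>) {x. (\<omega>, x) \<in> A}) \<in> borel_measurable M"
    by measurable
  then show ?thesis
  proof (rule measurable_cong[THEN iffD1, rotated])
    fix \<omega> assume \<omega>: "\<omega> \<in> space M"
    show "indicator locally_finite_outcomes \<omega> * (1 + emeasure (\<mu> \<omega>) W)
            * emeasure (normalized_restriction W \<omega>) {x. (\<omega>, x) \<in> A}
        = indicator locally_finite_outcomes \<omega> * emeasure (\<mu> \<omega>) ({x. (\<omega>, x) \<in> A} \<inter> ball 0 (real n))"
    proof (cases "\<omega> \<in> locally_finite_outcomes")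
      case True
      then have "emeasure (\<mu> \<omega>) W < \<infinity>"
        unfolding locally_finite_outcomes_def W_def by auto
      then have "(1 + emeasure (\<mu> \<omega>) W) * inverse (1 + emeasure (\<mu> \<omega>) W) = 1"
        using ennreal_divide_self[of "1 + emeasure (\<mu> \<omega>) W"] by (simp add: divide_ennreal_def)
      then show ?thesis
        using True emeasure_normalized_restriction[OF \<omega> W section_borel[OF A]]
        by (simp add: W_def Int_commute mult.assoc flip: mult.assoc[of "1 + _"])
    qed simp
  qed
qed

lemma measurable_emeasure_section:
  assumes A: "A \<in> sets (M \<Otimes>\<^sub>M borel)" and S: "\<And>\<omega>. \<omega> \<in> space M \<Longrightarrow> {x. (\<omega>, x) \<in> A} = S \<omega>"
  shows "(\<lambda>\<omega>. indicator locally_finite_outcomes \<omega> * emeasure (\<mu> \<omega>) (S \<omega>)) \<in> borel_measurable M"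
proof -
  have "(\<lambda>\<omega>. \<Squnion>n. indicator locally_finite_outcomes \<omega> * emeasure (\<mu> \<omega>) ({x. (\<omega>, x) \<in> A} \<inter> ball 0 (real n)))
          \<in> borel_measurable M"
    by (intro borel_measurable_SUP measurable_emeasure_section_ball[OF A]) simp
  then show ?thesis
  proof (rule measurable_cong[THEN iffD1, rotated])
    fix \<omega> assume \<omega>: "\<omega> \<in> space M"
    have "(\<Union>n. {x. (\<omega>, x) \<in> A} \<inter> ball 0 (real n)) = {x. (\<omega>, x) \<in> A}"
      by (auto simp: dist_norm intro: reals_Archimedean2)
    moreover have "(\<Squnion>n. emeasure (\<mu> \<omega>) ({x. (\<omega>, x) \<in> A} \<inter> ball 0 (real n)))
        = emeasure (\<mu> \<omega>) (\<Union>n. {x. (\<omega>, x) \<in> A} \<inter> ball 0 (real n))"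
      using section_borel[OF A]
      by (intro SUP_emeasure_incseq) (auto simp: sets_random_measure[OF \<omega>] incseq_def)
    ultimately show "(\<Squnion>n. indicator locally_finite_outcomes \<omega> * emeasure (\<mu> \<omega>) ({x. (\<omega>, x) \<in> A} \<inter> ball 0 (real n)))
        = indicator locally_finite_outcomes \<omega> * emeasure (\<mu> \<omega>) (S \<omega>)"
      using S[OF \<omega>] by (simp add: SUP_mult_left_ennreal[symmetric])
  qed
qed

lemma nn_integral_emeasure_section_flow_shift:
  assumes "A \<in> sets (M \<Otimes>\<^sub>M borel)" and "\<And>\<omega>. \<omega> \<in> space M \<Longrightarrow> {x. (\<omega>, x) \<in> A} = S \<omega>"
  shows "(\<integral>\<^sup>+\<omega>. emeasure (\<mu> (\<theta> z \<omega>)) (S (\<theta> z \<omega>)) \<partial>M) = (\<integral>\<^sup>+\<omega>. emeasure (\<mu> \<omega>) (S \<omega>) \<partial>M)"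
proof (rule nn_integral_flow_shift_AE[OF measurable_emeasure_section[OF assms]])
  show "AE \<omega> in M. emeasure (\<mu> \<omega>) (S \<omega>) = indicator locally_finite_outcomes \<omega> * emeasure (\<mu> \<omega>) (S \<omega>)"
    using AE_locally_finite_outcomes by eventually_elim simp
qed

text \<open>The translates of a face of the cube by \<open>-t\<cdot>e\<^sub>i\<close>, \<open>0 < t \<le> 1\<close>, are disjoint subsets of the
  cube carrying the same expected mass, so that mass must vanish.\<close>

lemma nn_integral_emeasure_cube_face:
  assumes fin: "(\<integral>\<^sup>+\<omega>. emeasure (\<mu> \<omega>) (cbox 0 One) \<partial>M) < \<infinity>" and i: "i \<in> Basis"
  shows "(\<integral>\<^sup>+\<omega>. emeasure (\<mu> \<omega>) {x \<in> cbox 0 One. x \<bullet> i = 1} \<partial>M) = 0"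
proof (rule ccontr)
  define F :: "'d set" where "F = {x \<in> cbox 0 One. x \<bullet> i = 1}"
  have F [measurable]: "F \<in> sets borel" unfolding F_def by measurable
  define t :: "nat \<Rightarrow> real" where "t m = inverse (real m + 1)" for m
  define T where "T m = {x. x - (- t m *\<^sub>R i) \<in> F}" for m
  have T [measurable]: "T m \<in> sets borel" for m unfolding T_def by (rule translate_borel[OF F])
  assume ne: "(\<integral>\<^sup>+\<omega>. emeasure (\<mu> \<omega>) {x \<in> cbox 0 One. x \<bullet> i = 1} \<partial>M) \<noteq> 0"
  have t: "0 < t m" "t m \<le> 1" for m unfolding t_def by (auto simp: field_simps)
  have T_inner: "x \<in> T m \<Longrightarrow> x \<bullet> i = 1 - t m" for x m
    unfolding T_def F_def using i by (auto simp: inner_add_left)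
  have "T m \<subseteq> cbox 0 One" for m
    using mem_cbox_if_translate_on_face[OF i less_imp_le[OF t(1)] t(2)]
    unfolding T_def F_def by auto
  then have le: "(\<integral>\<^sup>+\<omega>. emeasure (\<mu> \<omega>) (\<Union>m. T m) \<partial>M) \<le> (\<integral>\<^sup>+\<omega>. emeasure (\<mu> \<omega>) (cbox 0 One) \<partial>M)"
    by (intro nn_integral_mono emeasure_mono) (auto simp: sets_random_measure)
  have "disjoint_family T"
  proof (unfold disjoint_family_on_def, intro ballI impI)
    fix m n :: nat assume "m \<noteq> n"
    then have "t m \<noteq> t n" unfolding t_def by simp
    then show "T m \<inter> T n = {}" using T_inner[of _ m] T_inner[of _ n] by force
  qed
  then have "(\<integral>\<^sup>+\<omega>. emeasure (\<mu> \<omega>) (\<Union>m. T m) \<partial>M) = (\<integral>\<^sup>+\<omega>. (\<Sum>m. emeasure (\<mu> \<omega>) (T m)) \<partial>M)"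
    by (intro nn_integral_cong suminf_emeasure[symmetric]) (auto simp: sets_random_measure)
  also have "\<dots> = (\<Sum>m. (\<integral>\<^sup>+\<omega>. emeasure (\<mu> \<omega>) (T m) \<partial>M))"
    by (rule nn_integral_suminf) measurable
  also have "\<dots> = (\<Sum>m::nat. (\<integral>\<^sup>+\<omega>. emeasure (\<mu> \<omega>) F \<partial>M))"
    unfolding T_def by (simp only: nn_integral_emeasure_translate[OF F])
  also have "\<dots> = \<infinity>"
    using ne by (intro suminf_const_ennreal) (simp add: F_def)
  finally show False
    using le fin by simp
qed

lemma AE_emeasure_cube_boundary:
  assumes fin: "(\<integral>\<^sup>+\<omega>. emeasure (\<mu> \<omega>) (cbox 0 One) \<partial>M) < \<infinity>"
  shows "AE \<omega> in M. emeasure (\<mu> \<omega>) (cbox 0 One - unit_cube) = 0"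
proof -
  have sub: "cbox (0::'d) One - unit_cube \<subseteq> (\<Union>i\<in>Basis. {x \<in> cbox 0 One. x \<bullet> i = (1::real)})"
  proof
    fix x :: 'd assume x: "x \<in> cbox 0 One - unit_cube"
    then obtain i where i: "i \<in> Basis" "\<not> (0 \<le> x \<bullet> i \<and> x \<bullet> i < 1)"
      unfolding unit_cube_def by auto
    then have "x \<bullet> i = 1" using x by (auto simp: mem_box)
    then show "x \<in> (\<Union>j\<in>Basis. {y \<in> cbox 0 One. y \<bullet> j = 1})" using i(1) x by blast
  qed
  have "(\<integral>\<^sup>+\<omega>. emeasure (\<mu> \<omega>) (cbox 0 One - unit_cube) \<partial>M)
      \<le> (\<integral>\<^sup>+\<omega>. (\<Sum>i\<in>Basis. emeasure (\<mu> \<omega>) {x \<in> cbox 0 One. x \<bullet> i = 1}) \<partial>M)"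
  proof (rule nn_integral_mono)
    fix \<omega> assume \<omega>: "\<omega> \<in> space M"
    have "emeasure (\<mu> \<omega>) (cbox 0 One - unit_cube)
        \<le> emeasure (\<mu> \<omega>) (\<Union>i\<in>Basis. {x \<in> cbox 0 One. x \<bullet> i = 1})"
      by (rule emeasure_mono[OF sub]) (auto simp: sets_random_measure[OF \<omega>])
    also have "\<dots> \<le> (\<Sum>i\<in>Basis. emeasure (\<mu> \<omega>) {x \<in> cbox 0 One. x \<bullet> i = 1})"
      by (rule emeasure_subadditive_finite) (auto simp: sets_random_measure[OF \<omega>])
    finally show "emeasure (\<mu> \<omega>) (cbox 0 One - unit_cube)
        \<le> (\<Sum>i\<in>Basis. emeasure (\<mu> \<omega>) {x \<in> cbox 0 One. x \<bullet> i = 1})" .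
  qed
  also have "\<dots> = 0"
    by (subst nn_integral_sum) (auto simp: nn_integral_emeasure_cube_face[OF fin])
  finally have "(\<integral>\<^sup>+\<omega>. emeasure (\<mu> \<omega>) (cbox 0 One - unit_cube) \<partial>M) = 0"
    by simp
  then show ?thesis
    by (subst (asm) nn_integral_0_iff_AE) measurable
qed

lemma AE_emeasure_cbox_eq_unit_cube:
  assumes "(\<integral>\<^sup>+\<omega>. emeasure (\<mu> \<omega>) (cbox 0 One) \<partial>M) < \<infinity>"
  shows "AE \<omega> in M. \<forall>S\<in>sets borel. emeasure (\<mu> \<omega>) (cbox 0 One \<inter> S) = emeasure (\<mu> \<omega>) (unit_cube \<inter> S)"
  using AE_emeasure_cube_boundary[OF assms] AE_space
proof eventually_elim
  case (elim \<omega>)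
  then have boundary: "cbox 0 One - unit_cube \<in> null_sets (\<mu> \<omega>)"
    by (auto simp: null_sets_def sets_random_measure)
  show ?case
  proof
    fix S :: "'d set" assume S: "S \<in> sets borel"
    then have null: "(cbox 0 One - unit_cube) \<inter> S \<in> null_sets (\<mu> \<omega>)"
      using boundary elim by (auto intro: null_sets_subset simp: sets_random_measure)
    have "cbox 0 One \<inter> S = (unit_cube \<inter> S) \<union> ((cbox 0 One - unit_cube) \<inter> S)"
      using unit_cube_subset_cbox by blast
    then show "emeasure (\<mu> \<omega>) (cbox 0 One \<inter> S) = emeasure (\<mu> \<omega>) (unit_cube \<inter> S)"
      using emeasure_Un_null_set[OF _ null, of "unit_cube \<inter> S"] S elim
      by (simp add: sets_random_measure)
  qed
qed

lemma nn_integral_emeasure_unit_cube: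
  assumes "(\<integral>\<^sup>+\<omega>. emeasure (\<mu> \<omega>) (cbox 0 One) \<partial>M) < \<infinity>"
  shows "(\<integral>\<^sup>+\<omega>. emeasure (\<mu> \<omega>) unit_cube \<partial>M) = (\<integral>\<^sup>+\<omega>. emeasure (\<mu> \<omega>) (cbox 0 One) \<partial>M)"
  using AE_emeasure_cbox_eq_unit_cube[OF assms]
  by (intro nn_integral_cong_AE) (auto elim!: eventually_mono dest: bspec[of _ _ UNIV])

end

section \<open>Lattice tiles and mass transport\<close>

definition int_lattice :: "'d::euclidean_space set" where
  "int_lattice = {k. \<forall>i\<in>Basis. k \<bullet> i \<in> \<int>}"

definition lattice_tile :: "'d::euclidean_space \<Rightarrow> 'd set" where
  "lattice_tile k = {x. x - k \<in> unit_cube}"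

lemma lattice_tile_borel [measurable]: "lattice_tile k \<in> sets borel"
  unfolding lattice_tile_def by measurable

lemma countable_int_lattice: "countable (int_lattice :: 'd::euclidean_space set)"
proof -
  have "int_lattice \<subseteq> (\<lambda>f. \<Sum>i\<in>Basis. f i *\<^sub>R i) ` (PiE (Basis::'d set) (\<lambda>_. \<int>))"
  proof
    fix k :: 'd assume "k \<in> int_lattice"
    then have "restrict (\<lambda>i. k \<bullet> i) Basis \<in> PiE Basis (\<lambda>_. \<int>)"
      unfolding int_lattice_def by (simp add: PiE_iff)
    moreover have "k = (\<Sum>i\<in>Basis. restrict (\<lambda>i. k \<bullet> i) Basis i *\<^sub>R i)"
      by (simp add: euclidean_representation cong: sum.cong)
    ultimately show "k \<in> (\<lambda>f. \<Sum>i\<in>Basis. f i *\<^sub>R i) ` (PiE Basis (\<lambda>_. \<int>))"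
      by blast
  qed
  moreover have "countable (PiE (Basis::'d set) (\<lambda>_. (\<int>::real set)))"
    by (rule countable_PiE) (simp_all add: countable_int)
  ultimately show ?thesis
    by (rule countable_subset[OF _ countable_image])
qed

lemma uminus_int_lattice: "k \<in> int_lattice \<Longrightarrow> - k \<in> int_lattice"
  unfolding int_lattice_def by (auto simp: inner_minus_left)

lemma lattice_tile_cover: "\<exists>k\<in>int_lattice. (x::'d::euclidean_space) \<in> lattice_tile k"
proof -
  define k :: 'd where "k = (\<Sum>i\<in>Basis. of_int \<lfloor>x \<bullet> i\<rfloor> *\<^sub>R i)"
  have ki: "k \<bullet> i = of_int \<lfloor>x \<bullet> i\<rfloor>" if "i \<in> Basis" for i
    using that unfolding k_def by (simp add: inner_sum_left inner_Basis if_distrib cong: if_cong)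
  then have "k \<in> int_lattice" unfolding int_lattice_def by auto
  moreover have "x \<in> lattice_tile k"
    unfolding lattice_tile_def unit_cube_def using ki by (auto simp: inner_diff_left) linarith+
  ultimately show ?thesis by blast
qed

lemma lattice_tile_unique:
  fixes k k' :: "'d::euclidean_space"
  assumes "k \<in> int_lattice" "k' \<in> int_lattice" "x \<in> lattice_tile k" "x \<in> lattice_tile k'"
  shows "k = k'"
proof (rule euclidean_eqI)
  fix i :: 'd assume i: "i \<in> Basis"
  obtain a where a: "k \<bullet> i = of_int a" using assms(1) i unfolding int_lattice_def by (auto elim: Ints_cases)
  obtain b where b: "k' \<bullet> i = of_int b" using assms(2) i unfolding int_lattice_def by (auto elim: Ints_cases)
  have "0 \<le> x \<bullet> i - of_int a" "x \<bullet> i - of_int a < 1" "0 \<le> x \<bullet> i - of_int b" "x \<bullet> i - of_int b < 1"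
    using assms(3,4) i a b unfolding lattice_tile_def unit_cube_def by (auto simp: inner_diff_left)
  then have "a = b" by linarith
  then show "k \<bullet> i = k' \<bullet> i" using a b by simp
qed

locale allocation_setting = stationary_flow_system M \<theta>
  for M :: "'a measure" and \<theta> :: "'d::euclidean_space \<Rightarrow> 'a \<Rightarrow> 'a" +
  fixes \<xi> :: "'a \<Rightarrow> 'd measure" and \<tau> :: "'a \<Rightarrow> 'd \<Rightarrow> 'd option"
  assumes random_xi: "random_measure M \<xi>" and stationary_xi: "stationary_rm M \<theta> \<xi>"
    and allocation: "allocation M \<theta> \<tau>"
begin

sublocale xi: stationary_random_measure M \<theta> \<xi>
  by unfold_locales (rule random_xi, rule stationary_xi)

lemma AE_allocation_covariant:
  "AE \<omega> in M. \<forall>x y. \<tau> (\<theta> y \<omega>) (x - y) = map_option (\<lambda>z. z - y) (\<tau> \<omega> x)"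
  using allocation unfolding allocation_def by auto

lemma allocation_flow_shift:
  "\<forall>x y. \<tau> (\<theta> y \<omega>) (x - y) = map_option (\<lambda>z. z - y) (\<tau> \<omega> x) \<Longrightarrow>
   \<tau> (\<theta> z \<omega>) x = map_option (\<lambda>w. w - z) (\<tau> \<omega> (x + z))"
  by (metis add_diff_cancel)

lemma allocated_pairs_sets:
  assumes [measurable]: "B \<in> sets borel" "C \<in> sets borel"
  shows "{p \<in> space (M \<Otimes>\<^sub>M borel). snd p \<in> B \<and> (\<exists>y\<in>C. \<tau> (fst p) (snd p) = Some y)}
           \<in> sets (M \<Otimes>\<^sub>M borel)"
proof -
  have "{p \<in> space (M \<Otimes>\<^sub>M borel). \<exists>y\<in>C. \<tau> (fst p) (snd p) = Some y} \<in> sets (M \<Otimes>\<^sub>M borel)"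
    using allocation assms unfolding allocation_def by auto
  moreover have "{p \<in> space (M \<Otimes>\<^sub>M borel). snd p \<in> B} \<in> sets (M \<Otimes>\<^sub>M borel)"
    by measurable
  ultimately have "{p \<in> space (M \<Otimes>\<^sub>M borel). snd p \<in> B} \<inter>
      {p \<in> space (M \<Otimes>\<^sub>M borel). \<exists>y\<in>C. \<tau> (fst p) (snd p) = Some y} \<in> sets (M \<Otimes>\<^sub>M borel)"
    by blast
  then show ?thesis
    by (simp add: Collect_conj_eq[symmetric] Int_def conj_ac)
qed

lemma allocated_section:
  "\<omega> \<in> space M \<Longrightarrow> {x. (\<omega>, x) \<in> {p \<in> space (M \<Otimes>\<^sub>M borel). snd p \<in> B \<and> (\<exists>y\<in>C. \<tau> (fst p) (snd p) = Some y)}}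
     = {x \<in> B. \<exists>y\<in>C. \<tau> \<omega> x = Some y}"
  by (auto simp: space_pair_measure)

lemma allocated_borel:
  assumes "\<omega> \<in> space M" "B \<in> sets borel" "C \<in> sets borel"
  shows "{x \<in> B. \<exists>y\<in>C. \<tau> \<omega> x = Some y} \<in> sets borel"
  using section_borel[OF allocated_pairs_sets[OF assms(2,3)], of \<omega>] allocated_section[OF assms(1)]
  by simp

lemma unallocated_borel: "\<omega> \<in> space M \<Longrightarrow> {x. \<tau> \<omega> x = None} \<in> sets borel"
  using section_borel[of "{p \<in> space (M \<Otimes>\<^sub>M borel). \<tau> (fst p) (snd p) = None}" M \<omega>] allocation
  by (simp add: allocation_def space_pair_measure)

lemma measurable_emeasure_allocated:
  "B \<in> sets borel \<Longrightarrow> C \<in> sets borel \<Longrightarrow>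
   (\<lambda>\<omega>. indicator xi.locally_finite_outcomes \<omega> * emeasure (\<xi> \<omega>) {x \<in> B. \<exists>y\<in>C. \<tau> \<omega> x = Some y})
     \<in> borel_measurable M"
  by (rule xi.measurable_emeasure_section[OF allocated_pairs_sets allocated_section])

lemma measurable_emeasure_unallocated:
  "(\<lambda>\<omega>. indicator xi.locally_finite_outcomes \<omega> * emeasure (\<xi> \<omega>) {x. \<tau> \<omega> x = None}) \<in> borel_measurable M"
  using allocation
  by (intro xi.measurable_emeasure_section) (auto simp: allocation_def space_pair_measure)

lemma nn_integral_emeasure_allocated_flow_shift:
  "B \<in> sets borel \<Longrightarrow> C \<in> sets borel \<Longrightarrow>
   (\<integral>\<^sup>+\<omega>. emeasure (\<xi> (\<theta> z \<omega>)) {x \<in> B. \<exists>y\<in>C. \<tau> (\<theta> z \<omega>) x = Some y} \<partial>M)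
     = (\<integral>\<^sup>+\<omega>. emeasure (\<xi> \<omega>) {x \<in> B. \<exists>y\<in>C. \<tau> \<omega> x = Some y} \<partial>M)"
  by (rule xi.nn_integral_emeasure_section_flow_shift[OF allocated_pairs_sets allocated_section])

lemma nn_integral_swap_int_lattice:
  assumes "\<And>k. (\<lambda>\<omega>. indicator xi.locally_finite_outcomes \<omega> * f k \<omega>) \<in> borel_measurable M"
  shows "(\<integral>\<^sup>+\<omega>. (\<integral>\<^sup>+k. f k \<omega> \<partial>count_space int_lattice) \<partial>M)
       = (\<integral>\<^sup>+k. (\<integral>\<^sup>+\<omega>. f k \<omega> \<partial>M) \<partial>count_space int_lattice)"
proof -
  let ?G = "xi.locally_finite_outcomes"
  have "(\<integral>\<^sup>+\<omega>. (\<integral>\<^sup>+k. f k \<omega> \<partial>count_space int_lattice) \<partial>M)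
      = (\<integral>\<^sup>+\<omega>. (\<integral>\<^sup>+k. indicator ?G \<omega> * f k \<omega> \<partial>count_space int_lattice) \<partial>M)"
    using xi.AE_locally_finite_outcomes by (intro nn_integral_cong_AE) (auto elim!: eventually_mono)
  also have "\<dots> = (\<integral>\<^sup>+k. (\<integral>\<^sup>+\<omega>. indicator ?G \<omega> * f k \<omega> \<partial>M) \<partial>count_space int_lattice)"
    by (rule nn_integral_count_space_nn_integral[OF countable_int_lattice assms])
  also have "\<dots> = (\<integral>\<^sup>+k. (\<integral>\<^sup>+\<omega>. f k \<omega> \<partial>M) \<partial>count_space int_lattice)"
    using xi.AE_locally_finite_outcomes
    by (intro nn_integral_cong nn_integral_cong_AE) (auto elim!: eventually_mono)
  finally show ?thesis .
qed

definition mass_sent :: "'d \<Rightarrow> 'a \<Rightarrow> ennreal" where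
  "mass_sent k \<omega> = emeasure (\<xi> \<omega>) {x \<in> unit_cube. \<exists>y\<in>lattice_tile k. \<tau> \<omega> x = Some y}"

definition mass_received :: "'d \<Rightarrow> 'a \<Rightarrow> ennreal" where
  "mass_received k \<omega> = emeasure (\<xi> \<omega>) {x \<in> lattice_tile (- k). \<exists>y\<in>unit_cube. \<tau> \<omega> x = Some y}"

lemma AE_mass_sent_flow_shift: "AE \<omega> in M. mass_sent k (\<theta> (- k) \<omega>) = mass_received k \<omega>"
  using xi.AE_emeasure_flow_shift AE_allocation_covariant AE_space
proof eventually_elim
  case (elim \<omega>)
  let ?D = "{x \<in> unit_cube. \<exists>y\<in>lattice_tile k. \<tau> (\<theta> (- k) \<omega>) x = Some y}"
  have "\<tau> (\<theta> (- k) \<omega>) (x + k) = map_option (\<lambda>w. w + k) (\<tau> \<omega> x)" for x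
    using allocation_flow_shift[of \<omega> "- k" "x + k"] elim by simp
  then have "{x. x - (- k) \<in> ?D} = {x \<in> lattice_tile (- k). \<exists>y\<in>unit_cube. \<tau> \<omega> x = Some y}"
    by (auto simp: lattice_tile_def algebra_simps)
  moreover have "?D \<in> sets borel"
    using elim by (intro allocated_borel flow_in_space) auto
  ultimately show ?case
    unfolding mass_sent_def mass_received_def using elim by simp
qed

lemma nn_integral_mass_sent_eq_received: "(\<integral>\<^sup>+\<omega>. mass_sent k \<omega> \<partial>M) = (\<integral>\<^sup>+\<omega>. mass_received k \<omega> \<partial>M)"
proof -
  have "(\<integral>\<^sup>+\<omega>. mass_sent k \<omega> \<partial>M) = (\<integral>\<^sup>+\<omega>. mass_sent k (\<theta> (- k) \<omega>) \<partial>M)"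
    unfolding mass_sent_def by (rule nn_integral_emeasure_allocated_flow_shift[symmetric]) auto
  also have "\<dots> = (\<integral>\<^sup>+\<omega>. mass_received k \<omega> \<partial>M)"
    by (rule nn_integral_cong_AE[OF AE_mass_sent_flow_shift])
  finally show ?thesis .
qed

lemma emeasure_allocated_from_cube_eq_sum:
  assumes \<omega>: "\<omega> \<in> space M"
  shows "emeasure (\<xi> \<omega>) {x \<in> unit_cube. \<tau> \<omega> x \<noteq> None} = (\<integral>\<^sup>+k. mass_sent k \<omega> \<partial>count_space int_lattice)"
proof -
  have "{x \<in> unit_cube. \<tau> \<omega> x \<noteq> None}
      = (\<Union>k\<in>int_lattice. {x \<in> unit_cube. \<exists>y\<in>lattice_tile k. \<tau> \<omega> x = Some y})"
    using lattice_tile_cover by fastforce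
  moreover have "emeasure (\<xi> \<omega>) (\<Union>k\<in>int_lattice. {x \<in> unit_cube. \<exists>y\<in>lattice_tile k. \<tau> \<omega> x = Some y})
      = (\<integral>\<^sup>+k. mass_sent k \<omega> \<partial>count_space int_lattice)"
    unfolding mass_sent_def
  proof (rule emeasure_UN_countable)
    show "{x \<in> unit_cube. \<exists>y\<in>lattice_tile k. \<tau> \<omega> x = Some y} \<in> sets (\<xi> \<omega>)" for k
      using allocated_borel[OF \<omega>] xi.sets_random_measure[OF \<omega>] by simp
    show "disjoint_family_on (\<lambda>k. {x \<in> unit_cube. \<exists>y\<in>lattice_tile k. \<tau> \<omega> x = Some y}) int_lattice"
      unfolding disjoint_family_on_def using lattice_tile_unique by fastforce
  qed (rule countable_int_lattice)
  ultimately show ?thesis by simp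
qed

lemma emeasure_allocated_to_cube_eq_sum:
  assumes \<omega>: "\<omega> \<in> space M"
  shows "emeasure (\<xi> \<omega>) {x. \<exists>y\<in>unit_cube. \<tau> \<omega> x = Some y}
           = (\<integral>\<^sup>+k. mass_received k \<omega> \<partial>count_space int_lattice)"
proof -
  have "{x. \<exists>y\<in>unit_cube. \<tau> \<omega> x = Some y}
      = (\<Union>k\<in>int_lattice. {x \<in> lattice_tile (- k). \<exists>y\<in>unit_cube. \<tau> \<omega> x = Some y})"
  proof (intro set_eqI iffI)
    fix x assume "x \<in> {x. \<exists>y\<in>unit_cube. \<tau> \<omega> x = Some y}"
    moreover obtain k where "k \<in> int_lattice" "x \<in> lattice_tile k"
      using lattice_tile_cover by blast
    ultimately show "x \<in> (\<Union>k\<in>int_lattice. {x \<in> lattice_tile (- k). \<exists>y\<in>unit_cube. \<tau> \<omega> x = Some y})"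
      using uminus_int_lattice by (intro UN_I[of "- k"]) auto
  qed auto
  moreover have "emeasure (\<xi> \<omega>) (\<Union>k\<in>int_lattice. {x \<in> lattice_tile (- k). \<exists>y\<in>unit_cube. \<tau> \<omega> x = Some y})
      = (\<integral>\<^sup>+k. mass_received k \<omega> \<partial>count_space int_lattice)"
    unfolding mass_received_def
  proof (rule emeasure_UN_countable)
    show "{x \<in> lattice_tile (- k). \<exists>y\<in>unit_cube. \<tau> \<omega> x = Some y} \<in> sets (\<xi> \<omega>)" for k
      using allocated_borel[OF \<omega>] xi.sets_random_measure[OF \<omega>] by simp
    show "disjoint_family_on (\<lambda>k. {x \<in> lattice_tile (- k). \<exists>y\<in>unit_cube. \<tau> \<omega> x = Some y}) int_lattice"
      unfolding disjoint_family_on_def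
      using lattice_tile_unique[OF uminus_int_lattice uminus_int_lattice] by (metis (no_types, lifting) disjoint_iff
          mem_Collect_eq neg_equal_iff_equal)
  qed (rule countable_int_lattice)
  ultimately show ?thesis by simp
qed

text \<open>Mass transport principle: the mass sent from the unit cube into the tile \<open>k\<close> has, by
  stationarity, the same mean as the mass sent from the tile \<open>-k\<close> into the unit cube.\<close>

theorem mass_transport_unit_cube:
  "(\<integral>\<^sup>+\<omega>. emeasure (\<xi> \<omega>) {x \<in> unit_cube. \<tau> \<omega> x \<noteq> None} \<partial>M)
     = (\<integral>\<^sup>+\<omega>. emeasure (\<xi> \<omega>) {x. \<exists>y\<in>unit_cube. \<tau> \<omega> x = Some y} \<partial>M)"
proof -
  have "(\<lambda>\<omega>. indicator xi.locally_finite_outcomes \<omega> * mass_sent k \<omega>) \<in> borel_measurable M"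
    "(\<lambda>\<omega>. indicator xi.locally_finite_outcomes \<omega> * mass_received k \<omega>) \<in> borel_measurable M" for k
    unfolding mass_sent_def mass_received_def by (auto intro: measurable_emeasure_allocated)
  note swap = nn_integral_swap_int_lattice[OF this(1)] nn_integral_swap_int_lattice[OF this(2)]
  have "(\<integral>\<^sup>+\<omega>. emeasure (\<xi> \<omega>) {x \<in> unit_cube. \<tau> \<omega> x \<noteq> None} \<partial>M)
      = (\<integral>\<^sup>+\<omega>. (\<integral>\<^sup>+k. mass_sent k \<omega> \<partial>count_space int_lattice) \<partial>M)"
    by (intro nn_integral_cong emeasure_allocated_from_cube_eq_sum)
  also have "\<dots> = (\<integral>\<^sup>+\<omega>. (\<integral>\<^sup>+k. mass_received k \<omega> \<partial>count_space int_lattice) \<partial>M)"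
    by (simp only: swap nn_integral_mass_sent_eq_received)
  also have "\<dots> = (\<integral>\<^sup>+\<omega>. emeasure (\<xi> \<omega>) {x. \<exists>y\<in>unit_cube. \<tau> \<omega> x = Some y} \<partial>M)"
    by (intro nn_integral_cong emeasure_allocated_to_cube_eq_sum[symmetric])
  finally show ?thesis .
qed

end

section \<open>Allocations with appetite are balanced\<close>

locale appetite_setting = allocation_setting M \<theta> \<xi> \<tau>
  for M :: "'a measure" and \<theta> :: "'d::euclidean_space \<Rightarrow> 'a \<Rightarrow> 'a"
    and \<xi> :: "'a \<Rightarrow> 'd measure" and \<tau> :: "'a \<Rightarrow> 'd \<Rightarrow> 'd option" +
  fixes \<eta> :: "'a \<Rightarrow> 'd measure" and \<alpha> :: real
  assumes random_eta: "random_measure M \<eta>" and stationary_eta: "stationary_rm M \<theta> \<eta>"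
    and discrete_eta: "discrete_locally_finite M \<eta>"
    and ergodic: "ergodic_flow M \<theta>"
    and appetite: "appetite M \<xi> \<eta> \<tau> \<alpha>"
    and intensity_xi_pos: "0 < intensity M \<xi>" and intensity_xi_finite: "intensity M \<xi> < \<infinity>"
    and intensity_eta_pos: "0 < intensity M \<eta>" and intensity_eta_finite: "intensity M \<eta> < \<infinity>"
    and alpha_le: "ennreal \<alpha> \<le> intensity M \<xi> / intensity M \<eta>"
begin

sublocale eta: stationary_random_measure M \<theta> \<eta>
  by unfold_locales (rule random_eta, rule stationary_eta)

lemma alpha_intensity_le: "ennreal \<alpha> * intensity M \<eta> \<le> intensity M \<xi>"
proof -
  have "ennreal \<alpha> * intensity M \<eta> \<le> intensity M \<xi> / intensity M \<eta> * intensity M \<eta>"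
    by (rule mult_right_mono[OF alpha_le]) simp
  also have "\<dots> = intensity M \<xi>"
    using intensity_eta_pos intensity_eta_finite
    by (simp add: ennreal_divide_times ennreal_times_divide ennreal_mult_divide_eq
        mult.commute[of "intensity M \<xi>"])
  finally show ?thesis .
qed

lemma nn_integral_xi_unit_cube: "(\<integral>\<^sup>+\<omega>. emeasure (\<xi> \<omega>) unit_cube \<partial>M) = intensity M \<xi>"
  using xi.nn_integral_emeasure_unit_cube intensity_xi_finite by (simp add: intensity_def)

lemma nn_integral_eta_unit_cube: "(\<integral>\<^sup>+\<omega>. emeasure (\<eta> \<omega>) unit_cube \<partial>M) = intensity M \<eta>"
  using eta.nn_integral_emeasure_unit_cube intensity_eta_finite by (simp add: intensity_def)

definition regular_outcome :: "'a \<Rightarrow> bool" where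
  "regular_outcome \<omega> \<longleftrightarrow> \<omega> \<in> space M \<and>
     (\<forall>B. bounded B \<longrightarrow> finite (B \<inter> atoms \<eta> \<omega>)) \<and> emeasure (\<eta> \<omega>) (UNIV - atoms \<eta> \<omega>) = 0 \<and>
     (\<forall>C. bounded C \<longrightarrow> emeasure (\<eta> \<omega>) C < \<infinity>) \<and>
     null_in (\<xi> \<omega>) {z. \<exists>y. \<tau> \<omega> z = Some y \<and> y \<notin> atoms \<eta> \<omega>} \<and>
     eta_star \<eta> \<omega> {x. emeasure (\<xi> \<omega>) (cell \<tau> \<omega> x) > ennreal \<alpha> * emeasure (\<eta> \<omega>) {x}} = 0"

lemma AE_regular_outcome: "AE \<omega> in M. regular_outcome \<omega>"
proof -
  have "AE \<omega> in M. null_in (\<xi> \<omega>) {z. \<exists>y. \<tau> \<omega> z = Some y \<and> y \<notin> atoms \<eta> \<omega>}"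
    "AE \<omega> in M. eta_star \<eta> \<omega> {x. emeasure (\<xi> \<omega>) (cell \<tau> \<omega> x) > ennreal \<alpha> * emeasure (\<eta> \<omega>) {x}} = 0"
    using appetite unfolding appetite_def by auto
  moreover have "AE \<omega> in M. (\<forall>B. bounded B \<longrightarrow> finite (B \<inter> atoms \<eta> \<omega>)) \<and>
      emeasure (\<eta> \<omega>) (UNIV - atoms \<eta> \<omega>) = 0"
    using discrete_eta unfolding discrete_locally_finite_def by auto
  ultimately show ?thesis
    using eta.AE_locally_finite AE_space unfolding regular_outcome_def by eventually_elim auto
qed

lemma countable_atoms:
  assumes "regular_outcome \<omega>" shows "countable (atoms \<eta> \<omega>)"
proof -
  have "atoms \<eta> \<omega> = (\<Union>n::nat. ball 0 (real n) \<inter> atoms \<eta> \<omega>)"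
    by (auto simp: dist_norm intro: reals_Archimedean2)
  moreover have "countable (\<Union>n::nat. ball 0 (real n) \<inter> atoms \<eta> \<omega>)"
    using assms unfolding regular_outcome_def by (intro countable_UN) (auto intro: countable_finite)
  ultimately show ?thesis by simp
qed

lemma atoms_borel: "regular_outcome \<omega> \<Longrightarrow> atoms \<eta> \<omega> \<in> sets borel"
  by (rule sets.countable) (auto simp: countable_atoms)

lemma cell_borel: "\<omega> \<in> space M \<Longrightarrow> cell \<tau> \<omega> y \<in> sets borel"
  using allocated_borel[of \<omega> UNIV "{y}"] by (simp add: cell_def)

lemma emeasure_eta_eq_sum_atoms:
  assumes r: "regular_outcome \<omega>" and B: "B \<in> sets borel" "bounded B"
  shows "emeasure (\<eta> \<omega>) B = (\<Sum>y\<in>B \<inter> atoms \<eta> \<omega>. emeasure (\<eta> \<omega>) {y})"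
proof -
  have sets: "sets (\<eta> \<omega>) = sets borel"
    using r eta.sets_random_measure unfolding regular_outcome_def by auto
  have "UNIV - atoms \<eta> \<omega> \<in> null_sets (\<eta> \<omega>)"
    using r atoms_borel[OF r] sets unfolding regular_outcome_def by (simp add: null_sets_def)
  then have "B - atoms \<eta> \<omega> \<in> null_sets (\<eta> \<omega>)"
    by (rule null_sets_subset) (use B atoms_borel[OF r] sets in auto)
  then have "emeasure (\<eta> \<omega>) ((B \<inter> atoms \<eta> \<omega>) \<union> (B - atoms \<eta> \<omega>)) = emeasure (\<eta> \<omega>) (B \<inter> atoms \<eta> \<omega>)"
    using B atoms_borel[OF r] sets by (intro emeasure_Un_null_set) auto
  moreover have "(B \<inter> atoms \<eta> \<omega>) \<union> (B - atoms \<eta> \<omega>) = B"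
    by blast
  ultimately have "emeasure (\<eta> \<omega>) B = emeasure (\<eta> \<omega>) (B \<inter> atoms \<eta> \<omega>)"
    by simp
  also have "\<dots> = (\<Sum>y\<in>B \<inter> atoms \<eta> \<omega>. emeasure (\<eta> \<omega>) {y})"
    using r B(2) unfolding regular_outcome_def by (intro emeasure_eq_sum_singleton) (simp_all add: sets)
  finally show ?thesis .
qed

lemma emeasure_allocated_eq_sum_cells:
  assumes r: "regular_outcome \<omega>" and B: "B \<in> sets borel" "bounded B"
  shows "emeasure (\<xi> \<omega>) {x. \<exists>y\<in>B. \<tau> \<omega> x = Some y} = (\<Sum>y\<in>B \<inter> atoms \<eta> \<omega>. emeasure (\<xi> \<omega>) (cell \<tau> \<omega> y))"
proof -
  have \<omega>: "\<omega> \<in> space M" using r regular_outcome_def by auto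
  have sets: "sets (\<xi> \<omega>) = sets borel" by (rule xi.sets_random_measure[OF \<omega>])
  obtain N where N: "N \<in> null_sets (\<xi> \<omega>)" "{z. \<exists>y. \<tau> \<omega> z = Some y \<and> y \<notin> atoms \<eta> \<omega>} \<subseteq> N"
    using r unfolding regular_outcome_def null_in_def by auto
  have BA: "B \<inter> atoms \<eta> \<omega> \<in> sets borel" using B atoms_borel[OF r] by auto
  have allocated: "{x. \<exists>y\<in>C. \<tau> \<omega> x = Some y} \<in> sets (\<xi> \<omega>)" if "C \<in> sets borel" for C
    using allocated_borel[OF \<omega> _ that, of UNIV] sets by simp
  have "emeasure (\<xi> \<omega>) {x. \<exists>y\<in>B. \<tau> \<omega> x = Some y}
      \<le> emeasure (\<xi> \<omega>) ({x. \<exists>y\<in>B \<inter> atoms \<eta> \<omega>. \<tau> \<omega> x = Some y} \<union> N)"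
    using N allocated[OF BA] by (intro emeasure_mono) auto
  also have "\<dots> = emeasure (\<xi> \<omega>) {x. \<exists>y\<in>B \<inter> atoms \<eta> \<omega>. \<tau> \<omega> x = Some y}"
    using N allocated[OF BA] by (intro emeasure_Un_null_set) auto
  finally have "emeasure (\<xi> \<omega>) {x. \<exists>y\<in>B. \<tau> \<omega> x = Some y}
      \<le> emeasure (\<xi> \<omega>) {x. \<exists>y\<in>B \<inter> atoms \<eta> \<omega>. \<tau> \<omega> x = Some y}" .
  moreover have "emeasure (\<xi> \<omega>) {x. \<exists>y\<in>B \<inter> atoms \<eta> \<omega>. \<tau> \<omega> x = Some y}
      \<le> emeasure (\<xi> \<omega>) {x. \<exists>y\<in>B. \<tau> \<omega> x = Some y}"
    using allocated[OF B(1)] by (intro emeasure_mono) auto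
  ultimately have "emeasure (\<xi> \<omega>) {x. \<exists>y\<in>B. \<tau> \<omega> x = Some y}
      = emeasure (\<xi> \<omega>) {x. \<exists>y\<in>B \<inter> atoms \<eta> \<omega>. \<tau> \<omega> x = Some y}"
    by (rule antisym)
  also have "{x. \<exists>y\<in>B \<inter> atoms \<eta> \<omega>. \<tau> \<omega> x = Some y} = (\<Union>y\<in>B \<inter> atoms \<eta> \<omega>. cell \<tau> \<omega> y)"
    by (auto simp: cell_def)
  also have "emeasure (\<xi> \<omega>) \<dots> = (\<Sum>y\<in>B \<inter> atoms \<eta> \<omega>. emeasure (\<xi> \<omega>) (cell \<tau> \<omega> y))"
    using r B cell_borel[OF \<omega>] sets unfolding regular_outcome_def
    by (intro sum_emeasure[symmetric]) (auto simp: disjoint_family_on_def cell_def)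
  finally show ?thesis .
qed

lemma emeasure_cell_le:
  assumes "regular_outcome \<omega>" "y \<in> atoms \<eta> \<omega>"
  shows "emeasure (\<xi> \<omega>) (cell \<tau> \<omega> y) \<le> ennreal \<alpha> * emeasure (\<eta> \<omega>) {y}"
proof -
  have "{x. emeasure (\<xi> \<omega>) (cell \<tau> \<omega> x) > ennreal \<alpha> * emeasure (\<eta> \<omega>) {x}} \<inter> atoms \<eta> \<omega> = {}"
    using assms(1) unfolding regular_outcome_def eta_star_def emeasure_count_space_eq_0 by simp
  then show ?thesis using assms(2) by (auto simp: not_less[symmetric])
qed

definition unallocated_event :: "'a set" where
  "unallocated_event = {\<omega> \<in> space M.
     0 < indicator xi.locally_finite_outcomes \<omega> * emeasure (\<xi> \<omega>) {x. \<tau> \<omega> x = None}}"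

lemma unallocated_event_sets: "unallocated_event \<in> sets M"
  using measurable_emeasure_unallocated unfolding unallocated_event_def by measurable

lemma AE_unallocated_event_flow_invariant:
  "AE \<omega> in M. \<theta> z \<omega> \<in> unallocated_event \<longleftrightarrow> \<omega> \<in> unallocated_event"
  using AE_flow_shift[OF xi.AE_locally_finite_outcomes, of z] xi.AE_locally_finite_outcomes
    xi.AE_emeasure_flow_shift AE_allocation_covariant
proof eventually_elim
  case (elim \<omega>)
  then have \<omega>: "\<omega> \<in> space M" by (simp add: xi.locally_finite_outcomes_def)
  have "{x. x - z \<in> {x. \<tau> (\<theta> z \<omega>) x = None}} = {x. \<tau> \<omega> x = None}"
    using elim by auto
  then have "emeasure (\<xi> (\<theta> z \<omega>)) {x. \<tau> (\<theta> z \<omega>) x = None} = emeasure (\<xi> \<omega>) {x. \<tau> \<omega> x = None}"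
    using elim unallocated_borel[OF flow_in_space[OF \<omega>]] by simp
  then show ?case
    using elim flow_in_space[OF \<omega>] \<omega> unfolding unallocated_event_def by simp
qed

lemma unallocated_event_zero_one: "measure M unallocated_event = 0 \<or> measure M unallocated_event = 1"
  by (rule ergodic_AE_invariant_zero_one[OF ergodic unallocated_event_sets AE_unallocated_event_flow_invariant])

definition balanced_on :: "'d set \<Rightarrow> 'a \<Rightarrow> bool" where
  "balanced_on S \<omega> \<longleftrightarrow>
     (\<forall>y\<in>S \<inter> atoms \<eta> \<omega>. emeasure (\<xi> \<omega>) (cell \<tau> \<omega> y) = ennreal \<alpha> * emeasure (\<eta> \<omega>) {y})"

lemma AE_balanced_if_balanced_on_unit_cube:
  assumes "AE \<omega> in M. balanced_on unit_cube \<omega>"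
  shows "AE \<omega> in M. balanced_on UNIV \<omega>"
proof -
  have "AE \<omega> in M. \<forall>k\<in>int_lattice. balanced_on unit_cube (\<theta> k \<omega>)"
    by (subst AE_ball_countable[OF countable_int_lattice]) (auto intro: AE_flow_shift[OF assms])
  then show ?thesis
    using xi.AE_emeasure_flow_shift eta.AE_emeasure_flow_shift AE_allocation_covariant AE_space
  proof eventually_elim
    case (elim \<omega>)
    show "balanced_on UNIV \<omega>" unfolding balanced_on_def
    proof
      fix y assume y: "y \<in> UNIV \<inter> atoms \<eta> \<omega>"
      obtain k where k: "k \<in> int_lattice" "y \<in> lattice_tile k" using lattice_tile_cover by blast
      have "{x. x - k \<in> {y - k}} = {y}" by auto
      then have eta_y: "emeasure (\<eta> (\<theta> k \<omega>)) {y - k} = emeasure (\<eta> \<omega>) {y}"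
        using elim by (metis borel_singleton sets.empty_sets)
      have "{x. x - k \<in> cell \<tau> (\<theta> k \<omega>) (y - k)} = cell \<tau> \<omega> y"
        using elim unfolding cell_def by auto
      then have xi_y: "emeasure (\<xi> (\<theta> k \<omega>)) (cell \<tau> (\<theta> k \<omega>) (y - k)) = emeasure (\<xi> \<omega>) (cell \<tau> \<omega> y)"
        using elim cell_borel[OF flow_in_space] by metis
      have "y - k \<in> unit_cube \<inter> atoms \<eta> (\<theta> k \<omega>)"
        using y k eta_y unfolding atoms_def lattice_tile_def by simp
      then show "emeasure (\<xi> \<omega>) (cell \<tau> \<omega> y) = ennreal \<alpha> * emeasure (\<eta> \<omega>) {y}"
        using elim k(1) eta_y xi_y unfolding balanced_on_def by metis
    qed
  qed
qed

text \<open>If unallocated mass is present, condition (iii) of the appetite leaves no site below its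
  appetite, and condition (ii) none above it.\<close>

lemma AE_balanced_if_unallocated:
  assumes "measure M unallocated_event = 1"
  shows "AE \<omega> in M. balanced_on UNIV \<omega>"
proof -
  interpret prob_space M by (rule prob)
  have "AE \<omega> in M. \<not> (\<not> null_in (\<xi> \<omega>) {z. \<tau> \<omega> z = None} \<and>
      eta_star \<eta> \<omega> {x. emeasure (\<xi> \<omega>) (cell \<tau> \<omega> x) < ennreal \<alpha> * emeasure (\<eta> \<omega>) {x}} > 0)"
    using appetite unfolding appetite_def by auto
  then show ?thesis
    using AE_prob_1[OF assms] AE_regular_outcome
  proof eventually_elim
    case (elim \<omega>)
    have "0 < emeasure (\<xi> \<omega>) {x. \<tau> \<omega> x = None}"
      using elim unfolding unallocated_event_def by (cases "\<omega> \<in> xi.locally_finite_outcomes") auto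
    then have "\<not> null_in (\<xi> \<omega>) {z. \<tau> \<omega> z = None}"
      unfolding null_in_def null_sets_def
      by (metis (mono_tags, lifting) emeasure_mono mem_Collect_eq not_le)
    then have "eta_star \<eta> \<omega> {x. emeasure (\<xi> \<omega>) (cell \<tau> \<omega> x) < ennreal \<alpha> * emeasure (\<eta> \<omega>) {x}} = 0"
      using elim by auto
    then have "{x. emeasure (\<xi> \<omega>) (cell \<tau> \<omega> x) < ennreal \<alpha> * emeasure (\<eta> \<omega>) {x}} \<inter> atoms \<eta> \<omega> = {}"
      unfolding eta_star_def emeasure_count_space_eq_0 by simp
    then show "balanced_on UNIV \<omega>"
      using emeasure_cell_le[OF elim(3)] unfolding balanced_on_def by (auto simp: order.order_iff_strict)
  qed
qed

definition allocated_to_cube :: "'a \<Rightarrow> ennreal" where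
  "allocated_to_cube \<omega> = emeasure (\<xi> \<omega>) {x. \<exists>y\<in>unit_cube. \<tau> \<omega> x = Some y}"

lemma allocated_to_cube_eq_sum:
  "regular_outcome \<omega> \<Longrightarrow> allocated_to_cube \<omega> = (\<Sum>y\<in>unit_cube \<inter> atoms \<eta> \<omega>. emeasure (\<xi> \<omega>) (cell \<tau> \<omega> y))"
  unfolding allocated_to_cube_def by (rule emeasure_allocated_eq_sum_cells[OF _ unit_cube_borel bounded_unit_cube])

lemma appetite_unit_cube_eq_sum:
  "regular_outcome \<omega> \<Longrightarrow>
   ennreal \<alpha> * emeasure (\<eta> \<omega>) unit_cube = (\<Sum>y\<in>unit_cube \<inter> atoms \<eta> \<omega>. ennreal \<alpha> * emeasure (\<eta> \<omega>) {y})"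
  by (simp add: emeasure_eta_eq_sum_atoms[OF _ unit_cube_borel bounded_unit_cube] sum_distrib_left)

lemma allocated_to_cube_le: "regular_outcome \<omega> \<Longrightarrow> allocated_to_cube \<omega> \<le> ennreal \<alpha> * emeasure (\<eta> \<omega>) unit_cube"
  unfolding allocated_to_cube_eq_sum appetite_unit_cube_eq_sum by (rule sum_mono) (simp add: emeasure_cell_le)

lemma allocated_to_cube_if_balanced:
  "regular_outcome \<omega> \<Longrightarrow> balanced_on UNIV \<omega> \<Longrightarrow> allocated_to_cube \<omega> = ennreal \<alpha> * emeasure (\<eta> \<omega>) unit_cube"
  unfolding allocated_to_cube_eq_sum appetite_unit_cube_eq_sum balanced_on_def by (rule sum.cong) auto

lemma nn_integral_allocated_to_cube:
  "(\<integral>\<^sup>+\<omega>. allocated_to_cube \<omega> \<partial>M) = (\<integral>\<^sup>+\<omega>. emeasure (\<xi> \<omega>) {x \<in> unit_cube. \<tau> \<omega> x \<noteq> None} \<partial>M)"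
  unfolding allocated_to_cube_def by (rule mass_transport_unit_cube[symmetric])

lemma AE_unit_cube_allocated_if_not_unallocated:
  assumes "measure M unallocated_event = 0"
  shows "AE \<omega> in M. emeasure (\<xi> \<omega>) {x \<in> unit_cube. \<tau> \<omega> x \<noteq> None} = emeasure (\<xi> \<omega>) unit_cube"
proof -
  interpret prob_space M by (rule prob)
  have "unallocated_event \<in> null_sets M"
    using assms unallocated_event_sets by (simp add: null_sets_def emeasure_eq_measure)
  then have "AE \<omega> in M. \<omega> \<notin> unallocated_event"
    by (rule AE_not_in)
  then show ?thesis
    using xi.AE_locally_finite_outcomes
  proof eventually_elim
    case (elim \<omega>)
    then have \<omega>: "\<omega> \<in> space M" by (simp add: xi.locally_finite_outcomes_def)
    have sets: "sets (\<xi> \<omega>) = sets borel" by (rule xi.sets_random_measure[OF \<omega>])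
    have "{x. \<tau> \<omega> x = None} \<in> null_sets (\<xi> \<omega>)"
      using elim \<omega> unallocated_borel[OF \<omega>] sets by (simp add: unallocated_event_def null_sets_def)
    then have "emeasure (\<xi> \<omega>) ({x \<in> unit_cube. \<tau> \<omega> x \<noteq> None} \<union> {x. \<tau> \<omega> x = None})
        = emeasure (\<xi> \<omega>) {x \<in> unit_cube. \<tau> \<omega> x \<noteq> None}"
      using allocated_borel[OF \<omega> unit_cube_borel sets.top[of borel]] sets
      by (intro emeasure_Un_null_set) (simp_all add: not_None_eq)
    moreover have "emeasure (\<xi> \<omega>) unit_cube \<le> emeasure (\<xi> \<omega>) ({x \<in> unit_cube. \<tau> \<omega> x \<noteq> None} \<union> {x. \<tau> \<omega> x = None})"
      using allocated_borel[OF \<omega> unit_cube_borel sets.top[of borel]] unallocated_borel[OF \<omega>] sets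
      by (intro emeasure_mono) (auto simp: not_None_eq)
    moreover have "emeasure (\<xi> \<omega>) {x \<in> unit_cube. \<tau> \<omega> x \<noteq> None} \<le> emeasure (\<xi> \<omega>) unit_cube"
      using sets by (intro emeasure_mono) auto
    ultimately show ?case by simp
  qed
qed

text \<open>Without unallocated mass, the mass transport principle turns the pointwise bound on the mass
  allocated to the cube into an equality of means, since \<open>\<alpha> \<lambda>\<^sub>\<eta> \<le> \<lambda>\<^sub>\<xi>\<close>.\<close>

lemma AE_allocated_to_cube_if_not_unallocated:
  assumes "measure M unallocated_event = 0"
  shows "AE \<omega> in M. allocated_to_cube \<omega> = ennreal \<alpha> * emeasure (\<eta> \<omega>) unit_cube"
proof -
  let ?f = "\<lambda>\<omega>. indicator xi.locally_finite_outcomes \<omega> * allocated_to_cube \<omega>"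
  have "(\<integral>\<^sup>+\<omega>. ?f \<omega> \<partial>M) = (\<integral>\<^sup>+\<omega>. allocated_to_cube \<omega> \<partial>M)"
    by (rule nn_integral_cong_AE[OF xi.AE_indicator_locally_finite_outcomes])
  also have "\<dots> = intensity M \<xi>"
    using AE_unit_cube_allocated_if_not_unallocated[OF assms]
    by (simp add: nn_integral_allocated_to_cube nn_integral_xi_unit_cube[symmetric] cong: nn_integral_cong_AE)
  finally have f: "(\<integral>\<^sup>+\<omega>. ?f \<omega> \<partial>M) = intensity M \<xi>" .
  have "AE \<omega> in M. ?f \<omega> = ennreal \<alpha> * emeasure (\<eta> \<omega>) unit_cube"
  proof (rule AE_eq_if_nn_integral_ge)
    show "?f \<in> borel_measurable M"
      using measurable_emeasure_allocated[of UNIV unit_cube] by (simp add: allocated_to_cube_def)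
    show "AE \<omega> in M. ?f \<omega> \<le> ennreal \<alpha> * emeasure (\<eta> \<omega>) unit_cube"
      using AE_regular_outcome xi.AE_locally_finite_outcomes by eventually_elim (simp add: allocated_to_cube_le)
    show "(\<integral>\<^sup>+\<omega>. ennreal \<alpha> * emeasure (\<eta> \<omega>) unit_cube \<partial>M) \<le> (\<integral>\<^sup>+\<omega>. ?f \<omega> \<partial>M)"
      using alpha_intensity_le by (simp add: f nn_integral_cmult nn_integral_eta_unit_cube)
  qed (use f intensity_xi_finite in auto)
  then show ?thesis
    using xi.AE_locally_finite_outcomes by eventually_elim simp
qed

lemma AE_balanced_on_unit_cube_if_not_unallocated:
  assumes "measure M unallocated_event = 0"
  shows "AE \<omega> in M. balanced_on unit_cube \<omega>"
  using AE_allocated_to_cube_if_not_unallocated[OF assms] AE_regular_outcome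
proof eventually_elim
  case (elim \<omega>)
  have "emeasure (\<eta> \<omega>) unit_cube < \<infinity>"
    using elim bounded_unit_cube unfolding regular_outcome_def by auto
  then have fin: "(\<Sum>y\<in>unit_cube \<inter> atoms \<eta> \<omega>. ennreal \<alpha> * emeasure (\<eta> \<omega>) {y}) < \<infinity>"
    unfolding appetite_unit_cube_eq_sum[OF elim(2), symmetric] by (simp add: ennreal_mult_less_top)
  show ?case unfolding balanced_on_def
  proof
    fix y assume y: "y \<in> unit_cube \<inter> atoms \<eta> \<omega>"
    show "emeasure (\<xi> \<omega>) (cell \<tau> \<omega> y) = ennreal \<alpha> * emeasure (\<eta> \<omega>) {y}"
    proof (rule sum_eq_imp_eq_ennreal[OF _ _ _ fin y])
      show "finite (unit_cube \<inter> atoms \<eta> \<omega>)"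
        using elim(2) bounded_unit_cube unfolding regular_outcome_def by auto
      show "emeasure (\<xi> \<omega>) (cell \<tau> \<omega> z) \<le> ennreal \<alpha> * emeasure (\<eta> \<omega>) {z}"
        if "z \<in> unit_cube \<inter> atoms \<eta> \<omega>" for z
        using emeasure_cell_le[OF elim(2)] that by simp
      show "(\<Sum>z\<in>unit_cube \<inter> atoms \<eta> \<omega>. emeasure (\<xi> \<omega>) (cell \<tau> \<omega> z))
          = (\<Sum>z\<in>unit_cube \<inter> atoms \<eta> \<omega>. ennreal \<alpha> * emeasure (\<eta> \<omega>) {z})"
        using elim(1) allocated_to_cube_eq_sum[OF elim(2)] appetite_unit_cube_eq_sum[OF elim(2)] by simp
    qed
  qed
qed

lemma AE_balanced: "AE \<omega> in M. balanced_on UNIV \<omega>"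
proof (cases "measure M unallocated_event = 0")
  case True
  then show ?thesis
    by (intro AE_balanced_if_balanced_on_unit_cube AE_balanced_on_unit_cube_if_not_unallocated)
next
  case False
  then show ?thesis
    using unallocated_event_zero_one by (intro AE_balanced_if_unallocated) simp
qed

lemma alpha_balanced: "alpha_balanced M \<xi> \<eta> \<tau> \<alpha>"
  unfolding alpha_balanced_def using AE_regular_outcome AE_balanced
proof eventually_elim
  case (elim \<omega>)
  then have "UNIV - atoms \<eta> \<omega> \<in> null_sets (\<eta> \<omega>)"
    using atoms_borel eta.sets_random_measure by (auto simp: regular_outcome_def null_sets_def)
  moreover have "{x. emeasure (\<xi> \<omega>) (cell \<tau> \<omega> x) \<noteq> ennreal \<alpha> * emeasure (\<eta> \<omega>) {x}} \<subseteq> UNIV - atoms \<eta> \<omega>"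
    using elim unfolding balanced_on_def by auto
  ultimately show ?case unfolding null_in_def by blast
qed

lemma nn_integral_palm_allocated:
  "(\<integral>\<^sup>+\<omega>. (\<integral>\<^sup>+x. indicator (cbox 0 One) x * indicator {\<omega> \<in> space M. \<tau> \<omega> 0 \<noteq> None} (\<theta> x \<omega>) \<partial>\<xi> \<omega>) \<partial>M)
     = (\<integral>\<^sup>+\<omega>. emeasure (\<xi> \<omega>) {x \<in> cbox 0 One. \<tau> \<omega> x \<noteq> None} \<partial>M)"
proof (rule nn_integral_cong_AE)
  show "AE \<omega> in M.
      (\<integral>\<^sup>+x. indicator (cbox 0 One) x * indicator {\<omega> \<in> space M. \<tau> \<omega> 0 \<noteq> None} (\<theta> x \<omega>) \<partial>\<xi> \<omega>)
        = emeasure (\<xi> \<omega>) {x \<in> cbox 0 One. \<tau> \<omega> x \<noteq> None}"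
    using AE_allocation_covariant AE_space
  proof eventually_elim
    case (elim \<omega>)
    have "\<theta> x \<omega> \<in> {\<omega> \<in> space M. \<tau> \<omega> 0 \<noteq> None} \<longleftrightarrow> \<tau> \<omega> x \<noteq> None" for x
      using allocation_flow_shift[of \<omega> x 0] elim flow_in_space[OF elim(2)] by simp
    then have "indicator (cbox 0 One) x * indicator {\<omega> \<in> space M. \<tau> \<omega> 0 \<noteq> None} (\<theta> x \<omega>)
        = (indicator {x \<in> cbox 0 One. \<tau> \<omega> x \<noteq> None} x :: ennreal)" for x
      unfolding indicator_def by simp
    moreover have "{x \<in> cbox 0 One. \<tau> \<omega> x \<noteq> None} \<in> sets (\<xi> \<omega>)"
      using allocated_borel[OF elim(2) borel_closed[OF closed_cbox] sets.top[of borel]] xi.sets_random_measure[OF elim(2)]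
      by (simp add: not_None_eq)
    ultimately show ?case by simp
  qed
qed

lemma palm_allocated:
  "intensity M \<xi> * palm M \<theta> \<xi> {\<omega> \<in> space M. \<tau> \<omega> 0 \<noteq> None} = ennreal \<alpha> * intensity M \<eta>"
proof -
  have "AE \<omega> in M. emeasure (\<xi> \<omega>) {x \<in> cbox 0 One. \<tau> \<omega> x \<noteq> None}
      = emeasure (\<xi> \<omega>) {x \<in> unit_cube. \<tau> \<omega> x \<noteq> None}"
    using xi.AE_emeasure_cbox_eq_unit_cube[OF intensity_xi_finite[unfolded intensity_def]] AE_space
  proof eventually_elim
    case (elim \<omega>)
    have "UNIV - {x. \<tau> \<omega> x = None} \<in> sets borel"
      using unallocated_borel[OF elim(2)] by auto
    moreover have "{x \<in> B. \<tau> \<omega> x \<noteq> None} = B \<inter> (UNIV - {x. \<tau> \<omega> x = None})" for B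
      by auto
    ultimately show ?case
      using elim(1) by simp
  qed
  then have "(\<integral>\<^sup>+\<omega>. emeasure (\<xi> \<omega>) {x \<in> cbox 0 One. \<tau> \<omega> x \<noteq> None} \<partial>M)
      = (\<integral>\<^sup>+\<omega>. emeasure (\<xi> \<omega>) {x \<in> unit_cube. \<tau> \<omega> x \<noteq> None} \<partial>M)"
    by (rule nn_integral_cong_AE)
  also have "\<dots> = (\<integral>\<^sup>+\<omega>. allocated_to_cube \<omega> \<partial>M)"
    by (rule nn_integral_allocated_to_cube[symmetric])
  also have "\<dots> = (\<integral>\<^sup>+\<omega>. ennreal \<alpha> * emeasure (\<eta> \<omega>) unit_cube \<partial>M)"
  proof (rule nn_integral_cong_AE)
    show "AE \<omega> in M. allocated_to_cube \<omega> = ennreal \<alpha> * emeasure (\<eta> \<omega>) unit_cube"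
      using AE_regular_outcome AE_balanced by eventually_elim (rule allocated_to_cube_if_balanced)
  qed
  also have "\<dots> = ennreal \<alpha> * intensity M \<eta>"
    by (simp add: nn_integral_cmult nn_integral_eta_unit_cube)
  finally have numerator: "(\<integral>\<^sup>+\<omega>. (\<integral>\<^sup>+x. indicator (cbox 0 One) x
      * indicator {\<omega> \<in> space M. \<tau> \<omega> 0 \<noteq> None} (\<theta> x \<omega>) \<partial>\<xi> \<omega>) \<partial>M) = ennreal \<alpha> * intensity M \<eta>"
    unfolding nn_integral_palm_allocated .
  have "intensity M \<xi> * palm M \<theta> \<xi> {\<omega> \<in> space M. \<tau> \<omega> 0 \<noteq> None}
      = ennreal \<alpha> * intensity M \<eta> * intensity M \<xi> / intensity M \<xi>"
    unfolding palm_def numerator by (simp add: ennreal_times_divide mult.commute)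
  also have "\<dots> = ennreal \<alpha> * intensity M \<eta>"
    using intensity_xi_pos intensity_xi_finite by (intro ennreal_mult_divide_eq) auto
  finally show ?thesis .
qed

end

theorem proposition3p1:
  fixes M :: "'a measure"
    and \<theta> :: "'d::euclidean_space \<Rightarrow> 'a \<Rightarrow> 'a"
    and \<xi> \<eta> :: "'a \<Rightarrow> 'd measure"
    and \<tau> :: "'a \<Rightarrow> 'd \<Rightarrow> 'd option"
    and \<alpha> :: real
  assumes "prob_space M"
    and "measurable_flow M \<theta>"
    and "stationary_flow M \<theta>"
    and "ergodic_flow M \<theta>"
    and "random_measure M \<xi>" and "stationary_rm M \<theta> \<xi>"
    and "random_measure M \<eta>" and "stationary_rm M \<theta> \<eta>"
    and "discrete_locally_finite M \<eta>"
    and "0 < intensity M \<xi>" and "intensity M \<xi> < \<infinity>"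
    and "0 < intensity M \<eta>" and "intensity M \<eta> < \<infinity>"
    and "0 < intensity_star M \<eta>" and "intensity_star M \<eta> < \<infinity>"
    and "0 < \<alpha>" and "ennreal \<alpha> \<le> intensity M \<xi> / intensity M \<eta>"
    and "allocation M \<theta> \<tau>"
    and "appetite M \<xi> \<eta> \<tau> \<alpha>"
  shows "alpha_balanced M \<xi> \<eta> \<tau> \<alpha> \<and>
         intensity M \<xi> * palm M \<theta> \<xi> {\<omega> \<in> space M. \<tau> \<omega> 0 \<noteq> None}
           = ennreal \<alpha> * intensity M \<eta>"
proof -
  interpret appetite_setting M \<theta> \<xi> \<tau> \<eta> \<alpha>
    by (intro appetite_setting.intro allocation_setting.intro stationary_flow_system.intro
        appetite_setting_axioms.intro allocation_setting_axioms.intro) (fact assms)+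
  show ?thesis
    using alpha_balanced palm_allocated by simp
qed

end
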